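(* Let $(\mathcal B,<)$ be a monoidal poset, $B\in\mathcal B$ and $i,j$ nodes. Then: (i) if $i\not\sim j$ and $r_ir_jB<r_iB<B$, then $r_ir_jB<r_jB<B$; (ii) if $i\not\sim j$, $B<r_iB$, $B<r_jB$ and $r_iB\ne r_jB$, then $r_ir_jB>r_iB$ and $r_ir_jB>r_jB$; (iii) if $i\sim j$, $B<r_iB$ and $B<r_jB$, then $r_iB<r_jr_iB<r_ir_jr_iB$ and $r_jB<r_ir_jB<r_jr_ir_jB$; (iv) if $i\sim j$ and $r_jr_ir_jB<r_jr_iB<r_iB<B$, then $r_jr_ir_jB<r_ir_jB<r_jB<B$; (v) if $\alpha_i\notin B^\perp\cup B$, then either $r_iB<B$ or $r_iB>B$.
   Context: Setting: $M$ is a spherical simply laced Coxeter diagram with nodes $1,\dots,n$ ($i\sim j$: distinct adjacent nodes; $i\not\sim j$ otherwise); $W$ its Weyl group with positive roots $\Phi^+$, fundamental roots $\alpha_i$, reflections $r_i$, inner product with $(\alpha_i,\alpha_i)=2$, $(\alpha_i,\alpha_j)=-1$ if $i\sim j$, $0$ otherwise; height $\mathrm{ht}(\sum a_k\alpha_k)=\sum a_k$. For a set $B$ of mutually orthogonal positive roots, $wB=\Phi^+\cap\{\pm w\beta:\beta\in B\}$, and $B^\perp$ is the set of roots orthogonal to all elements of $B$. A $W$-orbit $\mathcal B$ of such sets is admissible if for every $B\in\mathcal B$, all nodes $i\not\sim j$ and root $\gamma$ with $\gamma,\gamma-\alpha_i+\alpha_j\in B$, $r_iB=r_jB$. For $B,C\in\mathcal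 B$ write $B\prec C$ if $B\ne C$ and the minimal height of an element of $B\setminus C$ is strictly smaller than the minimal height of an element of $C\setminus B$. For admissible $\mathcal B$, the monoidal poset $(\mathcal B,<)$ is $\mathcal B$ with the partial order $<$ given by the transitive closure of $\{(B,r_jB): B\in\mathcal B,\ j\text{ a node},\ B\prec r_jB\}$; $>$ is the reverse relation. *)

theory Defs
  imports Complex_Main
begin

text \<open>Simply laced Coxeter diagram on the nodes 1..n, given by an adjacency relation adj
  (adj i j means i and j are distinct adjacent nodes). Vectors are coefficient
  functions with respect to the fundamental roots alpha_1, ..., alpha_n.\<close>

definition nodes :: "nat \<Rightarrow> nat set" where
  "nodes n = {1..n}"

definition cartan :: "(nat \<Rightarrow> nat \<Rightarrow> bool) \<Rightarrow> nat \<Rightarrow> nat \<Rightarrow> int" where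
  "cartan adj i j = (if i = j then 2 else if adj i j then -1 else 0)"

definition ip :: "nat \<Rightarrow> (nat \<Rightarrow> nat \<Rightarrow> bool) \<Rightarrow> (nat \<Rightarrow> 'a::comm_ring_1) \<Rightarrow> (nat \<Rightarrow> 'a) \<Rightarrow> 'a" where
  "ip n adj u v = (\<Sum>i\<in>nodes n. \<Sum>j\<in>nodes n. of_int (cartan adj i j) * u i * v j)"

definition spherical_simply_laced :: "nat \<Rightarrow> (nat \<Rightarrow> nat \<Rightarrow> bool) \<Rightarrow> bool" where
  "spherical_simply_laced n adj \<longleftrightarrow>
     (\<forall>i j. adj i j \<longrightarrow> i \<in> nodes n \<and> j \<in> nodes n \<and> i \<noteq> j \<and> adj j i) \<and>
     (\<forall>v :: nat \<Rightarrow> real. (\<exists>i\<in>nodes n. v i \<noteq> 0) \<longrightarrow> ip n adj v v > 0)"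

definition alpha :: "nat \<Rightarrow> nat \<Rightarrow> int" where
  "alpha i = (\<lambda>k. if k = i then 1 else 0)"

definition rfl :: "nat \<Rightarrow> (nat \<Rightarrow> nat \<Rightarrow> bool) \<Rightarrow> nat \<Rightarrow> (nat \<Rightarrow> int) \<Rightarrow> (nat \<Rightarrow> int)" where
  "rfl n adj i v = (\<lambda>k. v k - ip n adj v (alpha i) * alpha i k)"

inductive_set roots :: "nat \<Rightarrow> (nat \<Rightarrow> nat \<Rightarrow> bool) \<Rightarrow> (nat \<Rightarrow> int) set"
  for n adj where
  simple: "i \<in> nodes n \<Longrightarrow> alpha i \<in> roots n adj"
| reflect: "v \<in> roots n adj \<Longrightarrow> i \<in> nodes n \<Longrightarrow> rfl n adj i v \<in> roots n adj"

definition pos_roots :: "nat \<Rightarrow> (nat \<Rightarrow> nat \<Rightarrow> bool) \<Rightarrow> (nat \<Rightarrow> int) set" where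
  "pos_roots n adj = {v \<in> roots n adj. \<forall>k. v k \<ge> 0}"

definition ht :: "nat \<Rightarrow> (nat \<Rightarrow> int) \<Rightarrow> int" where
  "ht n v = (\<Sum>k\<in>nodes n. v k)"

definition setact :: "nat \<Rightarrow> (nat \<Rightarrow> nat \<Rightarrow> bool) \<Rightarrow> nat \<Rightarrow> (nat \<Rightarrow> int) set \<Rightarrow> (nat \<Rightarrow> int) set" where
  "setact n adj i B = {\<gamma> \<in> pos_roots n adj. \<exists>\<beta>\<in>B. \<gamma> = rfl n adj i \<beta> \<or> \<gamma> = (\<lambda>k. - rfl n adj i \<beta> k)}"

text \<open>Action of w = r_{i1} ... r_{ik} given as the word [i1,...,ik].\<close>
definition wact :: "nat \<Rightarrow> (nat \<Rightarrow> nat \<Rightarrow> bool) \<Rightarrow> nat list \<Rightarrow> (nat \<Rightarrow> int) set \<Rightarrow> (nat \<Rightarrow> int) set" where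
  "wact n adj ws B = foldr (setact n adj) ws B"

definition orth_set :: "nat \<Rightarrow> (nat \<Rightarrow> nat \<Rightarrow> bool) \<Rightarrow> (nat \<Rightarrow> int) set \<Rightarrow> bool" where
  "orth_set n adj B \<longleftrightarrow> B \<subseteq> pos_roots n adj \<and>
     (\<forall>\<beta>\<in>B. \<forall>\<beta>'\<in>B. \<beta> \<noteq> \<beta>' \<longrightarrow> ip n adj \<beta> \<beta>' = 0)"

definition W_orbit :: "nat \<Rightarrow> (nat \<Rightarrow> nat \<Rightarrow> bool) \<Rightarrow> (nat \<Rightarrow> int) set \<Rightarrow> (nat \<Rightarrow> int) set set" where
  "W_orbit n adj B0 = {wact n adj ws B0 | ws. set ws \<subseteq> nodes n}"

definition is_orbit :: "nat \<Rightarrow> (nat \<Rightarrow> nat \<Rightarrow> bool) \<Rightarrow> (nat \<Rightarrow> int) set set \<Rightarrow> bool" where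
  "is_orbit n adj \<B> \<longleftrightarrow> (\<exists>B0. orth_set n adj B0 \<and> \<B> = W_orbit n adj B0)"

text \<open>Admissibility; i \<not>\<sim> j includes i = j (where the condition is trivial).\<close>
definition admissible :: "nat \<Rightarrow> (nat \<Rightarrow> nat \<Rightarrow> bool) \<Rightarrow> (nat \<Rightarrow> int) set set \<Rightarrow> bool" where
  "admissible n adj \<B> \<longleftrightarrow>
     (\<forall>B\<in>\<B>. \<forall>i\<in>nodes n. \<forall>j\<in>nodes n. \<not> adj i j \<longrightarrow>
        (\<forall>\<gamma>\<in>roots n adj. \<gamma> \<in> B \<and> (\<lambda>k. \<gamma> k - alpha i k + alpha j k) \<in> B \<longrightarrow>
            setact n adj i B = setact n adj j B))"

definition prec :: "nat \<Rightarrow> (nat \<Rightarrow> int) set \<Rightarrow> (nat \<Rightarrow> int) set \<Rightarrow> bool" where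
  "prec n B C \<longleftrightarrow> B \<noteq> C \<and> Min (ht n ` (B - C)) < Min (ht n ` (C - B))"

text \<open>The order < of the monoidal poset: transitive closure of B \<rightarrow> r_j B with B \<prec> r_j B.\<close>
definition mless :: "nat \<Rightarrow> (nat \<Rightarrow> nat \<Rightarrow> bool) \<Rightarrow> (nat \<Rightarrow> int) set set \<Rightarrow>
    (nat \<Rightarrow> int) set \<Rightarrow> (nat \<Rightarrow> int) set \<Rightarrow> bool" where
  "mless n adj \<B> B C \<longleftrightarrow>
     (B, C) \<in> {(B', setact n adj j B') | B' j. B' \<in> \<B> \<and> j \<in> nodes n \<and> prec n B' (setact n adj j B')}\<^sup>+"

definition perp :: "nat \<Rightarrow> (nat \<Rightarrow> nat \<Rightarrow> bool) \<Rightarrow> (nat \<Rightarrow> int) set \<Rightarrow> (nat \<Rightarrow> int) set" where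
  "perp n adj B = {\<gamma> \<in> roots n adj. \<forall>\<beta>\<in>B. ip n adj \<gamma> \<beta> = 0}"

end

theory Submission
  imports Defs
begin

text \<open>
  For a node \<open>k\<close>, \<open>r\<^sub>k B\<close> arises from \<open>B\<close> by replacing each root \<open>\<beta>\<close> with
  \<open>(\<beta>, \<alpha>\<^sub>k) = \<mp>1\<close> by \<open>\<beta> \<plusminus> \<alpha>\<^sub>k\<close>, all other roots being fixed. Hence \<open>B < r\<^sub>k B\<close> holds exactly
  when some root with \<open>(\<beta>, \<alpha>\<^sub>k) = -1\<close> is lower than every root with \<open>(\<beta>, \<alpha>\<^sub>k) = 1\<close>
  (\<open>k\<close> is an ascent of \<open>B\<close>). This uses that two orthogonal roots with coefficients \<open>-1\<close> and \<open>1\<close> never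
  differ in height by exactly 1, and that \<open><\<close> is acyclic, because the potential
  \<open>\<Sum>\<beta>\<in>B. q\<^bsup>ht \<beta>\<^esup>\<close> with \<open>q = 1/(|B| + 1)\<close> strictly decreases along it.

  Each of the five statements involves only the nodes \<open>i\<close> and \<open>j\<close>, so it is decided by the data
  \<open>((\<beta>, \<alpha>\<^sub>i), (\<beta>, \<alpha>\<^sub>j), ht \<beta>)\<close> of the roots \<open>\<beta> \<in> B\<close>. These data obey integrality
  constraints (the lattice vectors \<open>\<gamma> - \<beta> + x \<alpha>\<^sub>i + y \<alpha>\<^sub>j\<close> have even nonnegative norm, norm 0
  only if they vanish and nonzero height if of norm 2), from which the statements follow by a finite
  case analysis. The one configuration these constraints allow in (ii), roots \<open>\<beta>\<close> and
  \<open>\<beta> + \<alpha>\<^sub>i + \<alpha>\<^sub>j\<close> in \<open>B\<close>, is excluded by admissibility together with \<open>r\<^sub>i B \<noteq> r\<^sub>j B\<close>.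
\<close>

lemma ip_add_left: "ip n adj (\<lambda>k. u k + v k) w = ip n adj u w + ip n adj v w"
  by (simp add: ip_def algebra_simps sum.distrib)
lemma ip_diff_left: "ip n adj (\<lambda>k. u k - v k) w = ip n adj u w - ip n adj v w"
  by (simp add: ip_def algebra_simps sum_subtractf)
lemma ip_minus_left: "ip n adj (\<lambda>k. - u k) w = - ip n adj u w"
  by (simp add: ip_def sum_negf)
lemma ip_scale_left: "ip n adj (\<lambda>k. c * u k) w = c * ip n adj u w"
  by (simp add: ip_def sum_distrib_left algebra_simps)
lemma ip_sum_left: "ip n adj (\<lambda>k. \<Sum>s\<in>F. f s * s k) w = (\<Sum>s\<in>F. f s * ip n adj s w)"
  by (simp add: ip_def sum_distrib_left sum_distrib_right algebra_simps sum.swap[of _ F])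
lemma ip_add_right: "ip n adj w (\<lambda>k. u k + v k) = ip n adj w u + ip n adj w v"
  by (simp add: ip_def algebra_simps sum.distrib)
lemma ip_diff_right: "ip n adj w (\<lambda>k. u k - v k) = ip n adj w u - ip n adj w v"
  by (simp add: ip_def algebra_simps sum_subtractf)
lemma ip_minus_right: "ip n adj w (\<lambda>k. - u k) = - ip n adj w u"
  by (simp add: ip_def sum_negf)
lemma ip_scale_right: "ip n adj w (\<lambda>k. c * u k) = c * ip n adj w u"
  by (simp add: ip_def sum_distrib_left algebra_simps)
lemma ip_sum_right: "ip n adj w (\<lambda>k. \<Sum>s\<in>F. f s * s k) = (\<Sum>s\<in>F. f s * ip n adj w s)"
  by (simp add: ip_def sum_distrib_left sum_distrib_right algebra_simps sum.swap[of _ F])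

lemmas ip_linear = ip_add_left ip_diff_left ip_minus_left ip_scale_left
  ip_add_right ip_diff_right ip_minus_right ip_scale_right

lemma ht_linear:
  "ht n (\<lambda>k. u k + v k) = ht n u + ht n v" "ht n (\<lambda>k. u k - v k) = ht n u - ht n v"
  "ht n (\<lambda>k. - u k) = - ht n u" "ht n (\<lambda>k. c * u k) = c * ht n u"
  by (simp_all add: ht_def sum.distrib sum_subtractf sum_negf sum_distrib_left)

lemma ht_alpha: "i \<in> nodes n \<Longrightarrow> ht n (alpha i) = 1"
  by (simp add: ht_def alpha_def nodes_def)

section \<open>Roots and their action on positive roots\<close>

locale simply_laced =
  fixes n :: nat and adj :: "nat \<Rightarrow> nat \<Rightarrow> bool"
  assumes diagram: "spherical_simply_laced n adj"
begin

abbreviation N :: "nat set" where "N \<equiv> nodes n"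
abbreviation form :: "(nat \<Rightarrow> int) \<Rightarrow> (nat \<Rightarrow> int) \<Rightarrow> int" (infixl "\<cdot>" 70)
  where "u \<cdot> v \<equiv> ip n adj u v"
abbreviation \<sigma> :: "nat \<Rightarrow> (nat \<Rightarrow> int) \<Rightarrow> (nat \<Rightarrow> int)" where "\<sigma> \<equiv> rfl n adj"
abbreviation Phi :: "(nat \<Rightarrow> int) set" ("\<Phi>") where "\<Phi> \<equiv> roots n adj"
abbreviation Phi_pos :: "(nat \<Rightarrow> int) set" ("\<Phi>\<^sub>+") where "\<Phi>\<^sub>+ \<equiv> pos_roots n adj"

lemma finite_N [simp]: "finite N"
  by (simp add: nodes_def)

lemma adj_sym: "adj i j \<Longrightarrow> adj j i"
  using diagram unfolding spherical_simply_laced_def by blast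

lemma adj_nodes: "adj i j \<Longrightarrow> i \<in> N \<and> j \<in> N \<and> i \<noteq> j"
  using diagram unfolding spherical_simply_laced_def by blast

lemma cartan_sym: "cartan adj i j = cartan adj j i"
  unfolding cartan_def using adj_sym by auto

lemma cartan_adj: "adj i j \<Longrightarrow> cartan adj i j = -1"
  using adj_nodes by (simp add: cartan_def)

lemma cartan_not_adj: "\<not> adj i j \<Longrightarrow> i \<noteq> j \<Longrightarrow> cartan adj i j = 0"
  by (simp add: cartan_def)

lemma ip_sym: "u \<cdot> v = v \<cdot> u"
  unfolding ip_def by (subst sum.swap) (simp add: cartan_sym algebra_simps)

lemma ip_alpha_right: "j \<in> N \<Longrightarrow> u \<cdot> alpha j = (\<Sum>i\<in>N. cartan adj i j * u i)"
  unfolding ip_def alpha_def by (simp add: if_distrib cong: if_cong)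

lemma ip_alpha_alpha: "i \<in> N \<Longrightarrow> j \<in> N \<Longrightarrow> alpha i \<cdot> alpha j = cartan adj i j"
  by (simp add: ip_alpha_right) (simp add: alpha_def if_distrib cong: if_cong)

lemma ip_alpha_self: "i \<in> N \<Longrightarrow> alpha i \<cdot> alpha i = 2"
  by (simp add: ip_alpha_alpha cartan_def)

definition supported :: "(nat \<Rightarrow> int) \<Rightarrow> bool" where
  "supported v \<longleftrightarrow> (\<forall>k. k \<notin> N \<longrightarrow> v k = 0)"

lemma supported_alpha: "i \<in> N \<Longrightarrow> supported (alpha i)"
  and supported_add: "supported u \<Longrightarrow> supported v \<Longrightarrow> supported (\<lambda>k. u k + v k)"
  and supported_diff: "supported u \<Longrightarrow> supported v \<Longrightarrow> supported (\<lambda>k. u k - v k)"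
  and supported_minus: "supported u \<Longrightarrow> supported (\<lambda>k. - u k)"
  and supported_scale: "supported u \<Longrightarrow> supported (\<lambda>k. c * u k)"
  and supported_sum: "(\<And>s. s \<in> F \<Longrightarrow> supported s) \<Longrightarrow> supported (\<lambda>k. \<Sum>s\<in>F. f s * s k)"
  by (auto simp: supported_def alpha_def intro!: sum.neutral)

lemma nonzero_if_ip_self_nonzero: "v \<cdot> v \<noteq> 0 \<Longrightarrow> \<exists>k. v k \<noteq> 0"
  by (rule ccontr) (simp add: ip_def)

lemma ip_self_pos:
  assumes "supported v" "\<exists>k. v k \<noteq> 0"
  shows "v \<cdot> v > 0"
proof -
  obtain k where "k \<in> N" "v k \<noteq> 0" using assms unfolding supported_def by blast
  moreover have "\<forall>w :: nat \<Rightarrow> real. (\<exists>i\<in>N. w i \<noteq> 0) \<longrightarrow> ip n adj w w > 0"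
    using diagram unfolding spherical_simply_laced_def by blast
  ultimately have "ip n adj (\<lambda>k. real_of_int (v k)) (\<lambda>k. real_of_int (v k)) > 0"
    by (metis of_int_eq_0_iff)
  moreover have "ip n adj (\<lambda>k. real_of_int (v k)) (\<lambda>k. real_of_int (v k)) = real_of_int (v \<cdot> v)"
    unfolding ip_def by simp
  ultimately show ?thesis by simp
qed

lemma ip_self_even: "even (v \<cdot> v)"
proof -
  let ?A = "\<Sum>i\<in>N. \<Sum>j\<in>N. if adj i j \<and> i < j then v i * v j else 0"
  let ?A' = "\<Sum>i\<in>N. \<Sum>j\<in>N. if adj i j \<and> j < i then v i * v j else 0"
  have c: "of_int (cartan adj i j) * v i * v j = (if i = j then 2 * (v i * v j) else 0)
      - (if adj i j \<and> i < j then v i * v j else 0) - (if adj i j \<and> j < i then v i * v j else 0)"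
    for i j
    using adj_nodes[of i j] by (auto simp: cartan_def)
  have "v \<cdot> v = (\<Sum>i\<in>N. \<Sum>j\<in>N. (if i = j then 2 * (v i * v j) else 0)) - ?A - ?A'"
    unfolding ip_def c by (simp add: sum_subtractf)
  also have "(\<Sum>i\<in>N. \<Sum>j\<in>N. (if i = j then 2 * (v i * v j) else 0)) = 2 * (\<Sum>i\<in>N. v i * v i)"
    by (simp add: sum_distrib_left)
  also have "?A' = ?A"
    by (subst sum.swap) (auto intro!: sum.cong simp: adj_sym mult.commute)
  finally have "v \<cdot> v = 2 * ((\<Sum>i\<in>N. v i * v i) - ?A)"
    by simp
  then show ?thesis by simp
qed

lemma ip_self_ge2: "supported v \<Longrightarrow> \<exists>k. v k \<noteq> 0 \<Longrightarrow> v \<cdot> v \<ge> 2"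
  using ip_self_pos[of v] ip_self_even[of v] by (auto elim!: evenE)

lemma ip_self_nonneg: "supported v \<Longrightarrow> v \<cdot> v \<ge> 0"
  using ip_self_ge2[of v] by (cases "\<exists>k. v k \<noteq> 0") (auto simp: ip_def)

lemma ip_self_eq_0: "supported v \<Longrightarrow> v \<cdot> v = 0 \<Longrightarrow> v = (\<lambda>k. 0)"
  using ip_self_ge2 by fastforce

lemma norm2_sign_coherent:
  assumes "supported v" "v \<cdot> v = 2"
  shows "(\<forall>k. 0 \<le> v k) \<or> (\<forall>k. v k \<le> 0)"
proof (rule ccontr)
  assume "\<not> ?thesis"
  then obtain k1 k2 where k: "v k1 < 0" "v k2 > 0" by (meson not_le)
  define p where "p = (\<lambda>k. max (v k) 0)"
  define m where "m = (\<lambda>k. max (- v k) 0)"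
  have v: "v = (\<lambda>k. p k - m k)" unfolding p_def m_def by auto
  have "supported p" "supported m" using assms(1) by (auto simp: supported_def p_def m_def)
  moreover have "p k2 \<noteq> 0" "m k1 \<noteq> 0" using k by (auto simp: p_def m_def)
  ultimately have "p \<cdot> p \<ge> 2" "m \<cdot> m \<ge> 2" using ip_self_ge2 by blast+
  moreover have "p \<cdot> m \<le> 0"
    \<comment> \<open>p and m have disjoint supports and off-diagonal Cartan entries are \<open>\<le> 0\<close>\<close>
    unfolding ip_def
  proof (intro sum_nonpos)
    fix i j
    have "p i * m j \<ge> 0" "i = j \<Longrightarrow> p i * m j = 0" by (auto simp: p_def m_def)
    moreover have "i \<noteq> j \<Longrightarrow> cartan adj i j \<le> 0" by (simp add: cartan_def)
    ultimately show "of_int (cartan adj i j) * p i * m j \<le> 0"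
      by (cases "i = j") (auto simp: mult.assoc mult_nonpos_nonneg)
  qed
  moreover have "v \<cdot> v = p \<cdot> p + m \<cdot> m - 2 * (p \<cdot> m)"
    by (subst (1 2) v) (simp add: ip_linear ip_sym[of m p])
  ultimately show False using assms(2) by linarith
qed

lemma ht_pos: "supported v \<Longrightarrow> \<forall>k. 0 \<le> v k \<Longrightarrow> \<exists>k. v k \<noteq> 0 \<Longrightarrow> ht n v > 0"
  unfolding supported_def ht_def
  by (metis (mono_tags, lifting) finite_N order.not_eq_order_implies_strict sum_pos2)

lemma norm2_ht_nonzero:
  assumes "supported v" "v \<cdot> v = 2"
  shows "ht n v \<noteq> 0"
proof -
  have nz: "\<exists>k. v k \<noteq> 0" using nonzero_if_ip_self_nonzero assms(2) by simp
  from norm2_sign_coherent[OF assms] show ?thesis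
  proof
    assume "\<forall>k. v k \<le> 0"
    then have "ht n (\<lambda>k. - v k) > 0" using ht_pos[OF supported_minus[OF assms(1)]] nz by auto
    then show ?thesis by (simp add: ht_linear)
  qed (use ht_pos[OF assms(1) _ nz] in auto)
qed

lemma ip_reflect: "i \<in> N \<Longrightarrow> \<sigma> i u \<cdot> \<sigma> i v = u \<cdot> v"
  using ip_sym[of "alpha i" u] ip_sym[of "alpha i" v]
  unfolding rfl_def by (simp add: ip_linear ip_alpha_self)

lemma ip_reflect_alpha:
  "i \<in> N \<Longrightarrow> j \<in> N \<Longrightarrow> \<sigma> i v \<cdot> alpha j = v \<cdot> alpha j - (v \<cdot> alpha i) * cartan adj i j"
  unfolding rfl_def by (simp add: ip_linear ip_alpha_alpha)

lemma reflect_reflect: "i \<in> N \<Longrightarrow> \<sigma> i (\<sigma> i v) = v"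
  using ip_reflect_alpha[of i i v] unfolding rfl_def[of n adj i "\<sigma> i v"]
  by (simp add: cartan_def) (simp add: rfl_def)

lemma ht_reflect: "i \<in> N \<Longrightarrow> ht n (\<sigma> i v) = ht n v - v \<cdot> alpha i"
  unfolding rfl_def by (simp add: ht_linear ht_alpha)

lemma supported_reflect: "i \<in> N \<Longrightarrow> supported v \<Longrightarrow> supported (\<sigma> i v)"
  unfolding rfl_def by (intro supported_diff supported_scale supported_alpha)

lemma reflect_minus: "\<sigma> i (\<lambda>k. - v k) = (\<lambda>k. - \<sigma> i v k)"
  by (simp add: rfl_def ip_minus_left)

lemma reflect_alpha: "i \<in> N \<Longrightarrow> \<sigma> i (alpha i) = (\<lambda>k. - alpha i k)"
  by (simp add: rfl_def ip_alpha_self)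

lemma root_supported_norm2: "v \<in> \<Phi> \<Longrightarrow> supported v \<and> v \<cdot> v = 2"
proof (induction rule: roots.induct)
  case (simple i) then show ?case using supported_alpha ip_alpha_self by blast
next
  case (reflect v i) then show ?case using supported_reflect ip_reflect by simp
qed

lemma root_supported: "v \<in> \<Phi> \<Longrightarrow> supported v"
  and root_norm2: "v \<in> \<Phi> \<Longrightarrow> v \<cdot> v = 2"
  using root_supported_norm2 by blast+

lemma root_minus: "v \<in> \<Phi> \<Longrightarrow> (\<lambda>k. - v k) \<in> \<Phi>"
proof (induction rule: roots.induct)
  case (simple i)
  then show ?case using roots.reflect[OF roots.simple[where adj = adj, OF simple] simple]
    reflect_alpha[OF simple] by simp
next
  case (reflect v i)
  then show ?case using roots.reflect[OF reflect.IH reflect.hyps(2)] reflect_minus by simp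
qed

lemma root_sign_coherent: "v \<in> \<Phi> \<Longrightarrow> (\<forall>k. 0 \<le> v k) \<or> (\<forall>k. v k \<le> 0)"
  using norm2_sign_coherent root_supported_norm2 by blast

lemma root_nonzero: "v \<in> \<Phi> \<Longrightarrow> \<exists>k. v k \<noteq> 0"
  using nonzero_if_ip_self_nonzero root_norm2 by simp

lemma pos_roots_iff: "v \<in> \<Phi>\<^sub>+ \<longleftrightarrow> v \<in> \<Phi> \<and> (\<forall>k. 0 \<le> v k)"
  by (simp add: pos_roots_def)

lemma pos_root_root: "v \<in> \<Phi>\<^sub>+ \<Longrightarrow> v \<in> \<Phi>"
  by (simp add: pos_roots_iff)

lemma alpha_pos_root: "i \<in> N \<Longrightarrow> alpha i \<in> \<Phi>\<^sub>+"
  using roots.simple[of i] by (simp add: pos_roots_iff alpha_def)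

lemma pos_root_ht_ge1: "b \<in> \<Phi>\<^sub>+ \<Longrightarrow> ht n b \<ge> 1"
  using ht_pos[OF root_supported[OF pos_root_root]] root_nonzero[OF pos_root_root]
  by (fastforce simp: pos_roots_iff)

lemma pos_root_neq_minus:
  assumes "b \<in> \<Phi>\<^sub>+" "g \<in> \<Phi>\<^sub>+"
  shows "b \<noteq> (\<lambda>k. - g k)"
proof
  assume e: "b = (\<lambda>k. - g k)"
  obtain k where "g k \<noteq> 0" using root_nonzero[OF pos_root_root[OF assms(2)]] by blast
  moreover have "0 \<le> g k" "0 \<le> b k" using assms by (auto simp: pos_roots_iff)
  ultimately show False using e by simp
qed

text \<open>On positive roots, \<open>setact\<close> acts by \<open>root_act k v = pos_rep (\<sigma> k v)\<close>, the positive one of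
  \<open>\<plusminus>\<sigma> k v\<close>.\<close>

definition pos_rep :: "(nat \<Rightarrow> int) \<Rightarrow> (nat \<Rightarrow> int)" where
  "pos_rep v = (if \<forall>k. 0 \<le> v k then v else (\<lambda>k. - v k))"

definition root_act :: "nat \<Rightarrow> (nat \<Rightarrow> int) \<Rightarrow> (nat \<Rightarrow> int)" where
  "root_act k v = pos_rep (\<sigma> k v)"

lemma pos_rep_cases: "pos_rep v = v \<or> pos_rep v = (\<lambda>k. - v k)"
  by (simp add: pos_rep_def)

lemma pos_rep_root: "v \<in> \<Phi> \<Longrightarrow> pos_rep v \<in> \<Phi>\<^sub>+"
  using root_sign_coherent[of v] root_minus[of v] by (auto simp: pos_rep_def pos_roots_iff)

lemma pos_rep_pos: "v \<in> \<Phi>\<^sub>+ \<Longrightarrow> pos_rep v = v"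
  by (simp add: pos_rep_def pos_roots_iff)

lemma pos_rep_minus:
  assumes "v \<in> \<Phi>"
  shows "pos_rep (\<lambda>k. - v k) = pos_rep v"
proof (cases "\<forall>k. 0 \<le> v k")
  case True
  obtain k where "v k \<noteq> 0" using root_nonzero[OF assms] by blast
  with True have "\<not> (\<forall>k. v k \<le> 0)" by (metis antisym)
  with True show ?thesis by (auto simp: pos_rep_def)
next
  case False
  then have "\<forall>k. v k \<le> 0" using root_sign_coherent[OF assms] by blast
  with False show ?thesis by (auto simp: pos_rep_def)
qed

lemma root_act_pos_rep:
  assumes "w \<in> \<Phi>" "i \<in> N"
  shows "root_act i (pos_rep w) = pos_rep (\<sigma> i w)"
  using pos_rep_cases[of w] unfolding root_act_def
proof
  assume "pos_rep w = (\<lambda>k. - w k)"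
  then show "pos_rep (\<sigma> i (pos_rep w)) = pos_rep (\<sigma> i w)"
    using pos_rep_minus[OF roots.reflect[OF assms]] by (simp add: reflect_minus)
qed simp

lemma root_act_pos_root: "v \<in> \<Phi> \<Longrightarrow> i \<in> N \<Longrightarrow> root_act i v \<in> \<Phi>\<^sub>+"
  unfolding root_act_def by (intro pos_rep_root roots.reflect)

lemma root_act_involutive: "v \<in> \<Phi>\<^sub>+ \<Longrightarrow> i \<in> N \<Longrightarrow> root_act i (root_act i v) = v"
  using root_act_pos_rep[OF roots.reflect[OF pos_root_root]]
  by (simp add: root_act_def reflect_reflect pos_rep_pos)

lemma root_act_inj: "i \<in> N \<Longrightarrow> inj_on (root_act i) \<Phi>\<^sub>+"
  by (metis root_act_involutive inj_onI)

lemma setact_eq_image: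
  assumes "B \<subseteq> \<Phi>" "i \<in> N"
  shows "setact n adj i B = root_act i ` B"
proof (intro set_eqI iffI)
  fix g assume "g \<in> setact n adj i B"
  then obtain b where b: "b \<in> B" "g \<in> \<Phi>\<^sub>+" "g = \<sigma> i b \<or> g = (\<lambda>k. - \<sigma> i b k)"
    unfolding setact_def by blast
  have "\<sigma> i b \<in> \<Phi>" using b(1) assms by (intro roots.reflect) auto
  then have "root_act i b = g"
    using b(2,3) pos_rep_pos[of g] pos_rep_minus[of "\<sigma> i b"] by (auto simp: root_act_def)
  then show "g \<in> root_act i ` B" using b(1) by blast
next
  fix g assume "g \<in> root_act i ` B"
  then obtain b where b: "b \<in> B" "g = root_act i b" by blast
  then have "g \<in> \<Phi>\<^sub>+" using assms root_act_pos_root by blast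
  moreover have "g = \<sigma> i b \<or> g = (\<lambda>k. - \<sigma> i b k)"
    using pos_rep_cases[of "\<sigma> i b"] unfolding b(2) root_act_def .
  ultimately show "g \<in> setact n adj i B" using b(1) unfolding setact_def by blast
qed

lemma ip_roots_le1: "b \<in> \<Phi> \<Longrightarrow> g \<in> \<Phi> \<Longrightarrow> b \<noteq> g \<Longrightarrow> b \<cdot> g \<le> 1"
proof -
  assume b: "b \<in> \<Phi>" and g: "g \<in> \<Phi>" and "b \<noteq> g"
  then have "\<exists>k. b k - g k \<noteq> 0" by (metis eq_iff_diff_eq_0 ext)
  then have "(\<lambda>k. b k - g k) \<cdot> (\<lambda>k. b k - g k) \<ge> 2"
    using b g by (intro ip_self_ge2 supported_diff root_supported)
  then show "b \<cdot> g \<le> 1"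
    using root_norm2[OF b] root_norm2[OF g] ip_sym[of g b] by (simp add: ip_linear)
qed

lemma ip_pos_root_alpha_range:
  assumes "b \<in> \<Phi>\<^sub>+" "i \<in> N"
  shows "b \<cdot> alpha i \<in> {-1, 0, 1, 2}" and "b \<cdot> alpha i = 2 \<longleftrightarrow> b = alpha i"
proof -
  have b: "b \<in> \<Phi>" and a: "alpha i \<in> \<Phi>" using assms pos_root_root alpha_pos_root by blast+
  have "b \<cdot> (\<lambda>k. - alpha i k) \<le> 1"
    using ip_roots_le1[OF b root_minus[OF a]] pos_root_neq_minus[OF assms(1) alpha_pos_root[OF
      assms(2)]]
    by blast
  then have ge: "b \<cdot> alpha i \<ge> -1" by (simp add: ip_linear)
  have eq2: "b = alpha i" if "b \<cdot> alpha i = 2"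
  proof -
    have "(\<lambda>k. b k - alpha i k) \<cdot> (\<lambda>k. b k - alpha i k) = 0"
      using root_norm2[OF b] ip_alpha_self[OF assms(2)] ip_sym[of "alpha i" b] that
      by (simp add: ip_linear)
    then show ?thesis
      using ip_self_eq_0[OF supported_diff[OF root_supported[OF b] root_supported[OF a]]]
      by (simp add: fun_eq_iff)
  qed
  show "b \<cdot> alpha i = 2 \<longleftrightarrow> b = alpha i" using eq2 ip_alpha_self[OF assms(2)] by blast
  show "b \<cdot> alpha i \<in> {-1, 0, 1, 2}"
  proof (cases "b = alpha i")
    case False
    then show ?thesis using ip_roots_le1[OF b a] ge by auto
  qed (simp add: ip_alpha_self[OF assms(2)])
qed

lemma pos_root_other_coord:
  assumes "b \<in> \<Phi>\<^sub>+" "i \<in> N" "b \<noteq> alpha i"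
  shows "\<exists>k. k \<noteq> i \<and> b k > 0"
proof (rule ccontr)
  assume "\<not> ?thesis"
  then have "\<forall>k. k \<noteq> i \<longrightarrow> b k = 0"
    using assms(1) unfolding pos_roots_iff by (metis order.not_eq_order_implies_strict)
  then have e: "b = (\<lambda>k. b i * alpha i k)" by (auto simp: alpha_def fun_eq_iff)
  have "b \<cdot> b = b i * b i * 2"
    by (subst (1 2) e) (simp add: ip_linear ip_alpha_self[OF assms(2)])
  then have "b i * b i = 1" using root_norm2[OF pos_root_root[OF assms(1)]] by simp
  moreover have "b i \<ge> 0" using assms(1) by (simp add: pos_roots_iff)
  ultimately have "b i = 1" using zmult_eq_1_iff by auto
  with e assms(3) show False by simp
qed

lemma root_act_pos_root_eq:
  assumes "b \<in> \<Phi>\<^sub>+" "i \<in> N"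
  shows "root_act i b = (if b = alpha i then alpha i else \<sigma> i b)"
proof (cases "b = alpha i")
  case True
  then show ?thesis
    using pos_rep_minus[OF roots.simple[where adj = adj, OF assms(2)]] pos_rep_pos[OF
      alpha_pos_root[OF assms(2)]]
    by (simp add: root_act_def reflect_alpha assms(2))
next
  case False
  obtain k where k: "k \<noteq> i" "b k > 0" using pos_root_other_coord[OF assms False] by blast
  then have "\<sigma> i b k > 0" by (simp add: rfl_def alpha_def)
  then have "\<forall>k. 0 \<le> \<sigma> i b k"
    using root_sign_coherent[OF roots.reflect[OF pos_root_root[OF assms(1)] assms(2)]] by (meson
      not_le)
  then show ?thesis using False by (simp add: root_act_def pos_rep_def)
qed

lemma root_act_coord:
  assumes "b \<in> \<Phi>\<^sub>+" "i \<in> N" "j \<in> N"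
  shows "root_act i b \<cdot> alpha j =
    (if b \<cdot> alpha i = 2 then b \<cdot> alpha j else b \<cdot> alpha j - (b \<cdot> alpha i) * cartan adj i j)"
  using root_act_pos_root_eq[OF assms(1,2)] ip_pos_root_alpha_range(2)[OF assms(1,2)]
    ip_reflect_alpha[OF assms(2,3)] by auto

lemma root_act_ht:
  assumes "b \<in> \<Phi>\<^sub>+" "i \<in> N"
  shows "ht n (root_act i b) = (if b \<cdot> alpha i = 2 then ht n b else ht n b - b \<cdot> alpha i)"
  using root_act_pos_root_eq[OF assms] ip_pos_root_alpha_range(2)[OF assms] ht_reflect[OF assms(2)]
  by auto

lemma root_act_orth:
  assumes "b \<in> \<Phi>" "g \<in> \<Phi>" "i \<in> N"
  shows "root_act i b \<cdot> root_act i g = 0 \<longleftrightarrow> b \<cdot> g = 0"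
  using pos_rep_cases[of "\<sigma> i b"] pos_rep_cases[of "\<sigma> i g"] ip_reflect[OF assms(3), of b g]
  by (auto simp: root_act_def ip_linear)

lemma reflect_comm:
  assumes "i \<in> N" "j \<in> N" "\<not> adj i j" "i \<noteq> j"
  shows "\<sigma> i (\<sigma> j v) = \<sigma> j (\<sigma> i v)"
proof -
  have "cartan adj j i = 0" "cartan adj i j = 0" using assms adj_sym by (auto simp: cartan_def)
  then show ?thesis
    by (simp add: rfl_def fun_eq_iff ip_linear ip_alpha_alpha[OF assms(1,2)] ip_alpha_alpha[OF
      assms(2,1)])
qed

lemma reflect_braid:
  assumes "i \<in> N" "j \<in> N" "adj i j"
  shows "\<sigma> i (\<sigma> j (\<sigma> i v)) = \<sigma> j (\<sigma> i (\<sigma> j v))"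
proof -
  have "cartan adj j i = -1" "cartan adj i j = -1" using assms adj_sym cartan_adj by blast+
  then show ?thesis
    by (simp add: rfl_def fun_eq_iff ip_linear ip_alpha_alpha[OF assms(1,2)] ip_alpha_alpha[OF
      assms(2,1)]
        ip_alpha_self[OF assms(1)] ip_alpha_self[OF assms(2)]) (simp add: algebra_simps)
qed

lemma root_act_root_act:
  "b \<in> \<Phi> \<Longrightarrow> i \<in> N \<Longrightarrow> j \<in> N \<Longrightarrow> root_act i (root_act j b) = pos_rep (\<sigma> i (\<sigma> j b))"
  unfolding root_act_def[of j] by (simp add: root_act_pos_rep roots.reflect)

lemma root_act_comm:
  assumes "b \<in> \<Phi>" "i \<in> N" "j \<in> N" "\<not> adj i j" "i \<noteq> j"
  shows "root_act i (root_act j b) = root_act j (root_act i b)"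
  using root_act_root_act[OF assms(1,2,3)] root_act_root_act[OF assms(1,3,2)] reflect_comm[OF
    assms(2-5)]
  by simp

lemma root_act_braid:
  assumes "b \<in> \<Phi>" "i \<in> N" "j \<in> N" "adj i j"
  shows "root_act i (root_act j (root_act i b)) = root_act j (root_act i (root_act j b))"
proof -
  have "root_act i (root_act j (root_act i b)) = pos_rep (\<sigma> i (\<sigma> j (\<sigma> i b)))"
    if "i \<in> N" "j \<in> N" for i j
    using root_act_root_act[OF assms(1) that(2,1)] root_act_pos_rep[OF roots.reflect[OF
      roots.reflect]]
      assms(1) that by simp
  then show ?thesis using reflect_braid[OF assms(2-4)] assms(2,3) by simp
qed

lemma ip_root_alpha_exists_nonzero:
  assumes "s \<in> \<Phi>"
  shows "\<exists>k\<in>N. alpha k \<cdot> s \<noteq> 0"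
proof (rule ccontr)
  assume "\<not> ?thesis"
  then have z: "\<forall>k\<in>N. s \<cdot> alpha k = 0" using ip_sym by metis
  have "s \<cdot> s = (\<Sum>j\<in>N. \<Sum>i\<in>N. of_int (cartan adj i j) * s i * s j)"
    unfolding ip_def by (rule sum.swap)
  also have "\<dots> = (\<Sum>j\<in>N. s j * (s \<cdot> alpha j))"
    by (intro sum.cong refl) (simp add: ip_alpha_right sum_distrib_left mult.commute
      mult.left_commute)
  also have "\<dots> = 0" using z by simp
  finally show False using root_norm2[OF assms] by simp
qed

lemma bessel_inequality:
  assumes "finite F" "F \<subseteq> \<Phi>" "\<And>a b. a \<in> F \<Longrightarrow> b \<in> F \<Longrightarrow> a \<noteq> b \<Longrightarrow> a \<cdot> b = 0" "supported w"
  shows "(\<Sum>s\<in>F. (w \<cdot> s) * (w \<cdot> s)) \<le> 2 * (w \<cdot> w)"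
proof -
  define v where "v = (\<lambda>k. 2 * w k - (\<Sum>s\<in>F. (w \<cdot> s) * s k))"
  have collapse: "(\<Sum>t\<in>F. c t * (s \<cdot> t)) = 2 * c s" if "s \<in> F" for c s
  proof -
    have "(\<Sum>t\<in>F. c t * (s \<cdot> t)) = c s * (s \<cdot> s) + (\<Sum>t\<in>F - {s}. c t * (s \<cdot> t))"
      using assms(1) that by (simp add: sum.remove)
    also have "(\<Sum>t\<in>F - {s}. c t * (s \<cdot> t)) = 0" using assms(3) that by (intro sum.neutral) auto
    finally show ?thesis using root_norm2[of s] assms(2) that by auto
  qed
  have "supported v" unfolding v_def using assms(2,4) root_supported
    by (intro supported_diff supported_scale supported_sum) auto
  moreover have "v \<cdot> v = 4 * (w \<cdot> w) - 2 * (\<Sum>s\<in>F. (w \<cdot> s) * (w \<cdot> s))"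
  proof -
    have "(\<Sum>s\<in>F. (w \<cdot> s) * (s \<cdot> w)) = (\<Sum>s\<in>F. (w \<cdot> s) * (w \<cdot> s))"
      by (intro sum.cong refl) (simp add: ip_sym[of _ w])
    moreover have "(\<Sum>s\<in>F. (w \<cdot> s) * (\<Sum>t\<in>F. (w \<cdot> t) * (s \<cdot> t))) = (\<Sum>s\<in>F. 2 * ((w \<cdot> s) * (w \<cdot> s)))"
      using collapse by (intro sum.cong) auto
    ultimately show ?thesis
      unfolding v_def by (simp add: ip_linear ip_sum_left ip_sum_right sum_distrib_left[symmetric])
  qed
  ultimately show ?thesis using ip_self_nonneg[of v] by linarith
qed

lemma orth_roots_card_le:
  assumes "finite F" "F \<subseteq> \<Phi>" "\<And>a b. a \<in> F \<Longrightarrow> b \<in> F \<Longrightarrow> a \<noteq> b \<Longrightarrow> a \<cdot> b = 0"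
  shows "card F \<le> 4 * card N"
proof -
  have one: "1 \<le> (\<Sum>k\<in>N. (alpha k \<cdot> s) * (alpha k \<cdot> s))" if s: "s \<in> F" for s
  proof -
    obtain k where k: "k \<in> N" "alpha k \<cdot> s \<noteq> 0"
      using ip_root_alpha_exists_nonzero s assms(2) by blast
    then have "1 \<le> (alpha k \<cdot> s) * (alpha k \<cdot> s)"
      by (auto simp: int_one_le_iff_zero_less zero_less_mult_iff linorder_neq_iff)
    also have "\<dots> \<le> (\<Sum>k\<in>N. (alpha k \<cdot> s) * (alpha k \<cdot> s))"
      using k(1) by (intro member_le_sum) auto
    finally show ?thesis .
  qed
  have "int (card F) \<le> (\<Sum>s\<in>F. \<Sum>k\<in>N. (alpha k \<cdot> s) * (alpha k \<cdot> s))"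
    using sum_mono[OF one] by simp
  also have "\<dots> = (\<Sum>k\<in>N. \<Sum>s\<in>F. (alpha k \<cdot> s) * (alpha k \<cdot> s))" by (rule sum.swap)
  also have "\<dots> \<le> (\<Sum>k\<in>N. 4)"
  proof (intro sum_mono)
    fix k assume "k \<in> N"
    then show "(\<Sum>s\<in>F. (alpha k \<cdot> s) * (alpha k \<cdot> s)) \<le> 4"
      using bessel_inequality[OF assms supported_alpha] ip_alpha_self by fastforce
  qed
  finally show ?thesis by simp
qed

lemma orth_set_finite:
  assumes "orth_set n adj X"
  shows "finite X"
proof (rule ccontr)
  assume "infinite X"
  then obtain F where F: "finite F" "F \<subseteq> X" "card F = 4 * card N + 1"
    using infinite_arbitrarily_large by blast
  moreover have "card F \<le> 4 * card N"
  proof (rule orth_roots_card_le)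
    show "finite F" by fact
    show "F \<subseteq> \<Phi>" using F(2) assms pos_root_root unfolding orth_set_def by blast
    show "a \<cdot> b = 0" if "a \<in> F" "b \<in> F" "a \<noteq> b" for a b
      using that F(2) assms unfolding orth_set_def by blast
  qed
  ultimately show False by simp
qed

lemma setact_pos_roots: "X \<subseteq> \<Phi>\<^sub>+ \<Longrightarrow> k \<in> N \<Longrightarrow> setact n adj k X = root_act k ` X"
  using setact_eq_image[of X k] pos_root_root by blast

lemma orth_set_setact:
  assumes "orth_set n adj X" "k \<in> N"
  shows "orth_set n adj (setact n adj k X) \<and> card (setact n adj k X) = card X"
proof -
  have X: "X \<subseteq> \<Phi>\<^sub>+" using assms(1) by (simp add: orth_set_def)
  have "root_act k a \<cdot> root_act k b = 0" if "a \<in> X" "b \<in> X" "a \<noteq> b" for a b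
  proof -
    have "a \<cdot> b = 0" using that assms(1) unfolding orth_set_def by blast
    then show ?thesis using root_act_orth[OF pos_root_root pos_root_root assms(2)] that X by blast
  qed
  then have "orth_set n adj (root_act k ` X)"
    using X root_act_pos_root[OF pos_root_root assms(2)] unfolding orth_set_def by blast
  moreover have "card (root_act k ` X) = card X"
    using card_image inj_on_subset[OF root_act_inj[OF assms(2)] X] by blast
  ultimately show ?thesis using setact_pos_roots[OF X assms(2)] by simp
qed

lemma W_orbit_orth_set:
  assumes "orth_set n adj B0" "X \<in> W_orbit n adj B0"
  shows "orth_set n adj X \<and> card X = card B0"
proof -
  obtain ws where "X = wact n adj ws B0" "set ws \<subseteq> N" using assms(2) by (auto simp: W_orbit_def)
  then show ?thesis
  proof (induction ws arbitrary: X)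
    case Nil
    then show ?case using assms(1) by (simp add: wact_def)
  next
    case (Cons k ws)
    then show ?case using orth_set_setact[of "wact n adj ws B0" k] by (simp add: wact_def)
  qed
qed

lemma W_orbit_setact:
  assumes "X \<in> W_orbit n adj B0" "k \<in> N"
  shows "setact n adj k X \<in> W_orbit n adj B0"
proof -
  obtain ws where "X = wact n adj ws B0" "set ws \<subseteq> N" using assms(1) by (auto simp: W_orbit_def)
  then have "setact n adj k X = wact n adj (k # ws) B0" "set (k # ws) \<subseteq> N"
    using assms(2) by (simp_all add: wact_def)
  then show ?thesis unfolding W_orbit_def by blast
qed

lemma supported_shift:
  "b \<in> \<Phi> \<Longrightarrow> g \<in> \<Phi> \<Longrightarrow> i \<in> N \<Longrightarrow> j \<in> N \<Longrightarrow>
    supported (\<lambda>k. g k - b k + x * alpha i k + y * alpha j k)"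
  using root_supported supported_alpha by (metis supported_add supported_diff supported_scale)

lemma ip_self_shift:
  assumes "b \<in> \<Phi>" "g \<in> \<Phi>" "b \<cdot> g = 0" "i \<in> N" "j \<in> N"
  shows "(\<lambda>k. g k - b k + x * alpha i k + y * alpha j k) \<cdot> (\<lambda>k. g k - b k + x * alpha i k + y *
    alpha j k)
     = 4 + 2*x*x + 2*y*y + 2*x*y * cartan adj i j + 2*x * (g \<cdot> alpha i - b \<cdot> alpha i)
       + 2*y * (g \<cdot> alpha j - b \<cdot> alpha j)"
proof -
  have "alpha i \<cdot> alpha j = cartan adj i j" "alpha j \<cdot> alpha i = cartan adj i j"
    "alpha i \<cdot> alpha i = 2" "alpha j \<cdot> alpha j = 2"
    using ip_alpha_alpha assms(4,5) cartan_sym ip_alpha_self by auto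
  moreover have "alpha i \<cdot> g = g \<cdot> alpha i" "alpha i \<cdot> b = b \<cdot> alpha i"
    "alpha j \<cdot> g = g \<cdot> alpha j" "alpha j \<cdot> b = b \<cdot> alpha j" "g \<cdot> b = 0"
    using ip_sym assms(3) by metis+
  ultimately show ?thesis
    using root_norm2[OF assms(1)] root_norm2[OF assms(2)] assms(3)
    by (simp add: ip_linear) (simp add: algebra_simps)
qed

lemma shift_norm2_ht:
  assumes "b \<in> \<Phi>" "g \<in> \<Phi>" "b \<cdot> g = 0" "i \<in> N" "j \<in> N"
    and "4 + 2*x*x + 2*y*y + 2*x*y * cartan adj i j + 2*x * (g \<cdot> alpha i - b \<cdot> alpha i)
       + 2*y * (g \<cdot> alpha j - b \<cdot> alpha j) = 2"
  shows "ht n g - ht n b + x + y \<noteq> 0"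
proof -
  let ?v = "\<lambda>k. g k - b k + x * alpha i k + y * alpha j k"
  have "supported ?v" using supported_shift[OF assms(1,2,4,5)] .
  moreover have ht: "ht n ?v = ht n g - ht n b + x + y"
    using assms(4,5) by (simp add: ht_linear ht_alpha)
  moreover have "ht n ?v \<noteq> 0"
    using norm2_ht_nonzero[OF \<open>supported ?v\<close> ip_self_shift[OF assms(1-5), of x y, unfolded
      assms(6)]] .
  ultimately show ?thesis by simp
qed

lemma shift_norm0_eq:
  assumes "b \<in> \<Phi>" "g \<in> \<Phi>" "b \<cdot> g = 0" "i \<in> N" "j \<in> N"
    and "4 + 2*x*x + 2*y*y + 2*x*y * cartan adj i j + 2*x * (g \<cdot> alpha i - b \<cdot> alpha i)
       + 2*y * (g \<cdot> alpha j - b \<cdot> alpha j) = 0"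
  shows "g = (\<lambda>k. b k - x * alpha i k - y * alpha j k)"
proof -
  let ?v = "\<lambda>k. g k - b k + x * alpha i k + y * alpha j k"
  have "supported ?v" using supported_shift[OF assms(1,2,4,5)] .
  then have v0: "?v = (\<lambda>k. 0)" using ip_self_eq_0 ip_self_shift[OF assms(1-5), of x y, unfolded
    assms(6)] by blast
  show ?thesis
  proof (rule ext)
    fix k show "g k = b k - x * alpha i k - y * alpha j k" using fun_cong[OF v0, of k] by simp
  qed
qed

lemma root_shift_eq_0:
  assumes "b \<in> \<Phi>" "i \<in> N" "j \<in> N"
    and "2 + 2*x*x + 2*y*y + 2*x*y * cartan adj i j + 2*x * (b \<cdot> alpha i) + 2*y * (b \<cdot> alpha j) = 0"
  shows "b = (\<lambda>k. - x * alpha i k - y * alpha j k)"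
proof -
  let ?v = "\<lambda>k. b k + x * alpha i k + y * alpha j k"
  have "alpha i \<cdot> alpha j = cartan adj i j" "alpha j \<cdot> alpha i = cartan adj i j"
    "alpha i \<cdot> alpha i = 2" "alpha j \<cdot> alpha j = 2"
    using ip_alpha_alpha assms(2,3) cartan_sym ip_alpha_self by auto
  moreover have "alpha i \<cdot> b = b \<cdot> alpha i" "alpha j \<cdot> b = b \<cdot> alpha j"
    using ip_sym by metis+
  ultimately have "?v \<cdot> ?v = 0"
    using root_norm2[OF assms(1)] assms(4) by (simp add: ip_linear) (simp add: algebra_simps)
  moreover have "supported ?v"
    using root_supported[OF assms(1)] supported_alpha[OF assms(2)] supported_alpha[OF assms(3)]
    by (intro supported_add supported_scale)
  ultimately have v0: "?v = (\<lambda>k. 0)" using ip_self_eq_0 by blast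
  show ?thesis
  proof (rule ext)
    fix k show "b k = - x * alpha i k - y * alpha j k" using fun_cong[OF v0, of k] by simp
  qed
qed

end

section \<open>Ascents and the potential\<close>

definition ascent :: "('a \<Rightarrow> int) \<Rightarrow> ('a \<Rightarrow> int) \<Rightarrow> 'a set \<Rightarrow> bool" where
  "ascent c h T \<longleftrightarrow> (\<exists>t\<in>T. c t = -1 \<and> (\<forall>s\<in>T. c s = 1 \<longrightarrow> h t < h s))"

lemma ascent_image: "ascent c h (f ` T) \<longleftrightarrow> ascent (\<lambda>t. c (f t)) (\<lambda>t. h (f t)) T"
  by (simp add: ascent_def)

lemma not_ascent_cases:
  assumes "finite T" "\<not> ascent c h T"
  obtains "\<forall>t\<in>T. c t \<noteq> -1"
    | d where "d \<in> T" "c d = 1" "\<forall>t\<in>T. c t = -1 \<longrightarrow> h d \<le> h t"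
proof (cases "\<exists>t\<in>T. c t = -1")
  case True
  define S where "S = {t\<in>T. c t = -1}"
  have S: "finite S" "S \<noteq> {}" using assms(1) True by (auto simp: S_def)
  obtain t0 where t0: "t0 \<in> S" "Min (h ` S) = h t0" using obtains_MIN[OF S] .
  have min: "h t0 \<le> h t" if "t \<in> S" for t using Min_le[of "h ` S"] S(1) that t0(2) by auto
  obtain d where d: "d \<in> T" "c d = 1" "h d \<le> h t0"
    using assms(2) t0(1) unfolding ascent_def S_def by (auto simp: not_less)
  moreover have "\<forall>t\<in>T. c t = -1 \<longrightarrow> h d \<le> h t" using d(3) min unfolding S_def by fastforce
  ultimately show ?thesis using that(2) by blast
qed (use that(1) in blast)

definition potential :: "nat \<Rightarrow> nat \<Rightarrow> (nat \<Rightarrow> int) set \<Rightarrow> real" where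
  "potential n K X = (\<Sum>b\<in>X. (1 / (real K + 1)) ^ nat (ht n b))"

text \<open>With weight \<open>q = 1/(K+1)\<close> a single element of height \<open>h\<close> outweighs \<open>K\<close> elements of height
  \<open>> h\<close>, so for sets of equal size \<open>\<le> K\<close> the potential strictly decreases along \<open>prec\<close>. Equal
  sizes also make both differences in \<open>prec\<close> nonempty, so that its minima are not \<open>Min {}\<close>.\<close>

lemma prec_potential_less:
  assumes "finite X" "finite Y" "card X = card Y" "card Y \<le> K" "\<forall>b\<in>X. 0 \<le> ht n b" "prec n X Y"
  shows "potential n K Y < potential n K X"
proof -
  define q where "q = 1 / (real K + 1)"
  have q: "0 < q" "q \<le> 1" "real K * q < 1" by (auto simp: q_def field_simps)
  have less: "Min (ht n ` (X - Y)) < Min (ht n ` (Y - X))" and "X \<noteq> Y"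
    using assms(6) unfolding prec_def by auto
  then have XY: "X - Y \<noteq> {}" and YX: "Y - X \<noteq> {}"
    using card_subset_eq[OF assms(2) _ assms(3)] card_subset_eq[OF assms(1) _
      assms(3)[symmetric]] by blast+
  define h where "h = Min (ht n ` (X - Y))"
  have "finite (X - Y)" using assms(1) by simp
  then obtain x0 where x0: "x0 \<in> X - Y" "ht n x0 = h"
    using obtains_MIN[OF _ XY, of "ht n"] unfolding h_def by metis
  have h0: "0 \<le> h" using x0 assms(5) by auto
  have "(\<Sum>b\<in>Y - X. q ^ nat (ht n b)) \<le> (\<Sum>b\<in>Y - X. q ^ (nat h + 1))"
  proof (intro sum_mono power_decreasing)
    fix b assume "b \<in> Y - X"
    then have "Min (ht n ` (Y - X)) \<le> ht n b" using assms(2) by (intro Min_le) auto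
    then have "h < ht n b" using less unfolding h_def by linarith
    then show "nat h + 1 \<le> nat (ht n b)" using h0 by linarith
  qed (use q in auto)
  also have "\<dots> \<le> real K * q ^ (nat h + 1)"
    using card_mono[OF assms(2), of "Y - X"] assms(4) q(1) by (simp add: mult_right_mono)
  also have "\<dots> = (real K * q) * q ^ nat h" by simp
  also have "\<dots> < q ^ nat h" using q by simp
  also have "\<dots> \<le> (\<Sum>b\<in>X - Y. q ^ nat (ht n b))"
    using x0 assms(1) q(1) member_le_sum[of x0 "X - Y" "\<lambda>b. q ^ nat (ht n b)"] by auto
  finally have "(\<Sum>b\<in>Y - X. q ^ nat (ht n b)) < (\<Sum>b\<in>X - Y. q ^ nat (ht n b))" .
  moreover have "potential n K X = (\<Sum>b\<in>X \<inter> Y. q ^ nat (ht n b)) + (\<Sum>b\<in>X - Y. q ^ nat (ht n b))"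
    "potential n K Y = (\<Sum>b\<in>X \<inter> Y. q ^ nat (ht n b)) + (\<Sum>b\<in>Y - X. q ^ nat (ht n b))"
    using sum.Int_Diff[OF assms(1)] sum.Int_Diff[OF assms(2)] Int_commute
    unfolding potential_def q_def by metis+
  ultimately show ?thesis by simp
qed

section \<open>Rank-2 profiles\<close>

text \<open>The profile of a positive root \<open>\<beta>\<close> relative to nodes \<open>i\<close>, \<open>j\<close> is
  \<open>((\<beta>, \<alpha>\<^sub>i), (\<beta>, \<alpha>\<^sub>j), ht \<beta>)\<close> (\<open>profile_of\<close> below), and \<open>refl_i c\<close>, \<open>refl_j c\<close> describe its
  change under \<open>root_act i\<close>, \<open>root_act j\<close>, where \<open>c = (\<alpha>\<^sub>i, \<alpha>\<^sub>j)\<close>. The profiles of an orbit element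
  satisfy \<open>rank2_data\<close>; the \<open>rank2_\<close> lemmas are finite case checks on such data.\<close>

type_synonym profile = "int \<times> int \<times> int"

definition ci :: "profile \<Rightarrow> int" where "ci t = fst t"
definition cj :: "profile \<Rightarrow> int" where "cj t = fst (snd t)"
definition hgt :: "profile \<Rightarrow> int" where "hgt t = snd (snd t)"

lemma profile_sel [simp]: "ci (a, b, h) = a" "cj (a, b, h) = b" "hgt (a, b, h) = h"
  by (simp_all add: ci_def cj_def hgt_def)

lemma profile_eq_iff: "t = s \<longleftrightarrow> ci t = ci s \<and> cj t = cj s \<and> hgt t = hgt s"
  by (cases t; cases s) auto

definition refl_i :: "int \<Rightarrow> profile \<Rightarrow> profile" where
  "refl_i c t = (if ci t = 2 then t else (- ci t, cj t - ci t * c, hgt t - ci t))"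

definition refl_j :: "int \<Rightarrow> profile \<Rightarrow> profile" where
  "refl_j c t = (if cj t = 2 then t else (ci t - cj t * c, - cj t, hgt t - cj t))"

lemma refl_simps:
  "ci (refl_i c t) = (if ci t = 2 then ci t else - ci t)"
  "cj (refl_i c t) = (if ci t = 2 then cj t else cj t - ci t * c)"
  "hgt (refl_i c t) = (if ci t = 2 then hgt t else hgt t - ci t)"
  "ci (refl_j c t) = (if cj t = 2 then ci t else ci t - cj t * c)"
  "cj (refl_j c t) = (if cj t = 2 then cj t else - cj t)"
  "hgt (refl_j c t) = (if cj t = 2 then hgt t else hgt t - cj t)"
  by (simp_all add: refl_i_def refl_j_def)

text \<open>For profiles \<open>t\<close>, \<open>s\<close> of orthogonal roots \<open>\<beta>\<close>, \<open>\<gamma>\<close>, \<open>pnorm c t s x y\<close> is the squared norm of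
  \<open>\<gamma> - \<beta> + x \<alpha>\<^sub>i + y \<alpha>\<^sub>j\<close>; the case checks only need \<open>x, y \<in> {-1, 0, 1}\<close>.\<close>

definition pnorm :: "int \<Rightarrow> profile \<Rightarrow> profile \<Rightarrow> int \<Rightarrow> int \<Rightarrow> int" where
  "pnorm c t s x y = 4 + 2*x*x + 2*y*y + 2*x*y*c + 2*x*(ci s - ci t) + 2*y*(cj s - cj t)"

definition profile_ok :: "int \<Rightarrow> profile \<Rightarrow> bool" where
  "profile_ok c t \<longleftrightarrow> ci t \<in> {-1, 0, 1, 2} \<and> cj t \<in> {-1, 0, 1, 2} \<and> hgt t \<ge> 1 \<and>
     (ci t = 2 \<longrightarrow> cj t = c \<and> hgt t = 1) \<and> (cj t = 2 \<longrightarrow> ci t = c \<and> hgt t = 1) \<and>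
     (c = -1 \<longrightarrow> \<not> (ci t = -1 \<and> cj t = -1) \<and> (ci t = 1 \<and> cj t = 1 \<longrightarrow> hgt t = 2))"

definition pair_ok :: "int \<Rightarrow> profile \<Rightarrow> profile \<Rightarrow> bool" where
  "pair_ok c t s \<longleftrightarrow>
     (ci t = 2 \<longrightarrow> ci s = 0) \<and> (cj t = 2 \<longrightarrow> cj s = 0) \<and>
     (c = -1 \<and> ci t = 1 \<and> cj t = 1 \<longrightarrow> ci s + cj s = 0) \<and>
     (\<forall>x\<in>{-1, 0, 1}. \<forall>y\<in>{-1, 0, 1}. pnorm c t s x y \<ge> 0 \<and>
        (pnorm c t s x y = 0 \<longrightarrow> ci s = ci t - 2*x - y*c \<and> cj s = cj t - x*c - 2*y \<and>
           hgt s = hgt t - (x + y) \<and> x * ci t + y * cj t = 2) \<and>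
        (pnorm c t s x y = 2 \<longrightarrow> hgt s - hgt t + x + y \<noteq> 0))"

definition triple_ok :: "int \<Rightarrow> profile \<Rightarrow> profile \<Rightarrow> profile \<Rightarrow> bool" where
  "triple_ok c t s u \<longleftrightarrow>
     (\<forall>x\<in>{-1, 0, 1}. \<forall>y\<in>{-1, 0, 1}. pnorm c t s x y = 0 \<longrightarrow> x * ci u + y * cj u = 0)"

definition rank2_data :: "int \<Rightarrow> profile set \<Rightarrow> bool" where
  "rank2_data c T \<longleftrightarrow> finite T \<and> (\<forall>t\<in>T. profile_ok c t) \<and>
     (\<forall>t\<in>T. \<forall>s\<in>T. t \<noteq> s \<longrightarrow> pair_ok c t s) \<and>
     (\<forall>t\<in>T. \<forall>s\<in>T. \<forall>u\<in>T. t \<noteq> s \<and> t \<noteq> u \<and> s \<noteq> u \<longrightarrow> triple_ok c t s u)"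

lemmas profile_okD = profile_ok_def[THEN iffD1, simplified]
lemmas pair_okD = pair_ok_def[THEN iffD1, unfolded pnorm_def, simplified]
lemmas triple_okD = triple_ok_def[THEN iffD1, unfolded pnorm_def, simplified]

lemma rank2_finite: "rank2_data c T \<Longrightarrow> finite T"
  by (simp add: rank2_data_def)

lemma rank2_pair:
  assumes "rank2_data c T" "t \<in> T" "s \<in> T"
  shows "profile_ok c t \<and> profile_ok c s \<and> (t \<noteq> s \<longrightarrow> pair_ok c t s \<and> pair_ok c s t)"
proof -
  have "\<forall>t\<in>T. profile_ok c t" "\<forall>t\<in>T. \<forall>s\<in>T. t \<noteq> s \<longrightarrow> pair_ok c t s"
    using assms(1) unfolding rank2_data_def by simp_all
  then show ?thesis using assms(2,3) by simp
qed

lemma rank2_triple: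
  assumes "rank2_data c T" "t \<in> T" "s \<in> T" "u \<in> T"
  shows "t \<noteq> s \<and> t \<noteq> u \<and> s \<noteq> u \<longrightarrow> triple_ok c t s u \<and> triple_ok c s u t \<and> triple_ok c u t s"
proof -
  have "\<forall>t\<in>T. \<forall>s\<in>T. \<forall>u\<in>T. t \<noteq> s \<and> t \<noteq> u \<and> s \<noteq> u \<longrightarrow> triple_ok c t s u"
    using assms(1) unfolding rank2_data_def by simp
  then show ?thesis using assms(2-4) by auto
qed

lemma rank2_adj_ascent_j_after_i:
  assumes G: "rank2_data (-1) T" and "ascent ci hgt T" "ascent cj hgt T"
  shows "ascent cj hgt (refl_i (-1) ` T)"
proof (rule ccontr)
  assume "\<not> ?thesis"
  then have neg: "\<not> ascent (\<lambda>t. cj (refl_i (-1) t)) (\<lambda>t. hgt (refl_i (-1) t)) T"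
    by (simp add: ascent_image)
  obtain u1 where u1: "u1 \<in> T" "ci u1 = -1" "\<forall>s\<in>T. ci s = 1 \<longrightarrow> hgt u1 < hgt s"
    using assms(2) unfolding ascent_def by blast
  obtain u2 where u2: "u2 \<in> T" "cj u2 = -1" "\<forall>s\<in>T. cj s = 1 \<longrightarrow> hgt u2 < hgt s"
    using assms(3) unfolding ascent_def by blast
  show False
  proof (cases rule: not_ascent_cases[OF rank2_finite[OF G] neg])
    case 1
    then show False using u1 u2 rank2_pair[OF G u1(1) u2(1)]
      unfolding refl_simps profile_eq_iff by (smt (z3) profile_okD pair_okD)
  next
    case (2 d)
    then show False using u1 u2 rank2_pair[OF G u1(1) u2(1)]
        rank2_pair[OF G u1(1) 2(1)] rank2_pair[OF G u2(1) 2(1)]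
      unfolding refl_simps profile_eq_iff by (smt (z3) profile_okD pair_okD)
  qed
qed

lemma rank2_adj_ascent_i_after_ji:
  assumes G: "rank2_data (-1) T" and "ascent ci hgt T" "ascent cj hgt T"
    and "ascent cj hgt (refl_i (-1) ` T)"
  shows "ascent ci hgt (refl_j (-1) ` refl_i (-1) ` T)"
proof (rule ccontr)
  assume "\<not> ?thesis"
  then have neg: "\<not> ascent (\<lambda>t. ci (refl_j (-1) (refl_i (-1) t))) (\<lambda>t. hgt (refl_j (-1) (refl_i
    (-1) t))) T"
    by (simp add: ascent_image image_image)
  obtain u1 where u1: "u1 \<in> T" "ci u1 = -1" "\<forall>s\<in>T. ci s = 1 \<longrightarrow> hgt u1 < hgt s"
    using assms(2) unfolding ascent_def by blast
  obtain u2 where u2: "u2 \<in> T" "cj u2 = -1" "\<forall>s\<in>T. cj s = 1 \<longrightarrow> hgt u2 < hgt s"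
    using assms(3) unfolding ascent_def by blast
  obtain u3 where u3: "u3 \<in> T" "cj (refl_i (-1) u3) = -1"
    "\<forall>s\<in>T. cj (refl_i (-1) s) = 1 \<longrightarrow> hgt (refl_i (-1) u3) < hgt (refl_i (-1) s)"
    using assms(4) unfolding ascent_def by blast
  show False
  proof (cases rule: not_ascent_cases[OF rank2_finite[OF G] neg])
    case 1
    then show False using u1 u2 u3 rank2_pair[OF G u1(1) u2(1)] rank2_pair[OF G u1(1) u3(1)]
        rank2_pair[OF G u2(1) u3(1)]
      unfolding refl_simps profile_eq_iff by (smt (z3) profile_okD pair_okD)
  next
    case (2 d)
    then show False using u1 u2 u3 rank2_pair[OF G u1(1) u2(1)] rank2_pair[OF G u1(1) u3(1)]
        rank2_pair[OF G u2(1) u3(1)] rank2_pair[OF G u1(1) 2(1)] rank2_pair[OF G u2(1) 2(1)]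
        rank2_pair[OF G u3(1) 2(1)]
      unfolding refl_simps profile_eq_iff by (smt (z3) profile_okD pair_okD)
  qed
qed

lemma rank2_adj_ascent_j:
  assumes G: "rank2_data (-1) T" and "ascent ci hgt T" "ascent cj hgt (refl_i (-1) ` T)"
    and "ascent ci hgt (refl_j (-1) ` refl_i (-1) ` T)"
  shows "ascent cj hgt T"
proof (rule ccontr)
  assume neg: "\<not> ?thesis"
  obtain u1 where u1: "u1 \<in> T" "ci u1 = -1" "\<forall>s\<in>T. ci s = 1 \<longrightarrow> hgt u1 < hgt s"
    using assms(2) unfolding ascent_def by blast
  obtain u2 where u2: "u2 \<in> T" "cj (refl_i (-1) u2) = -1"
    "\<forall>s\<in>T. cj (refl_i (-1) s) = 1 \<longrightarrow> hgt (refl_i (-1) u2) < hgt (refl_i (-1) s)"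
    using assms(3) unfolding ascent_def by blast
  obtain u3 where u3: "u3 \<in> T" "ci (refl_j (-1) (refl_i (-1) u3)) = -1"
    "\<forall>s\<in>T. ci (refl_j (-1) (refl_i (-1) s)) = 1 \<longrightarrow>
       hgt (refl_j (-1) (refl_i (-1) u3)) < hgt (refl_j (-1) (refl_i (-1) s))"
    using assms(4) unfolding ascent_def by blast
  show False
  proof (cases rule: not_ascent_cases[OF rank2_finite[OF G] neg])
    case 1
    then show False using u1 u2 u3 rank2_pair[OF G u1(1) u2(1)] rank2_pair[OF G u1(1) u3(1)]
        rank2_pair[OF G u2(1) u3(1)]
      unfolding refl_simps profile_eq_iff by (smt (z3) profile_okD pair_okD)
  next
    case (2 d)
    then show False using u1 u2 u3 rank2_pair[OF G u1(1) u2(1)] rank2_pair[OF G u1(1) u3(1)]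
        rank2_pair[OF G u2(1) u3(1)] rank2_pair[OF G u1(1) 2(1)] rank2_pair[OF G u2(1) 2(1)]
        rank2_pair[OF G u3(1) 2(1)]
      unfolding refl_simps profile_eq_iff by (smt (z3) profile_okD pair_okD)
  qed
qed

lemma rank2_orth_ascent_i:
  assumes G: "rank2_data 0 T" and "ascent cj hgt T" "ascent ci hgt (refl_j 0 ` T)"
  shows "ascent ci hgt T"
proof (rule ccontr)
  assume neg: "\<not> ?thesis"
  obtain u1 where u1: "u1 \<in> T" "cj u1 = -1" "\<forall>s\<in>T. cj s = 1 \<longrightarrow> hgt u1 < hgt s"
    using assms(2) unfolding ascent_def by blast
  obtain u2 where u2: "u2 \<in> T" "ci (refl_j 0 u2) = -1"
    "\<forall>s\<in>T. ci (refl_j 0 s) = 1 \<longrightarrow> hgt (refl_j 0 u2) < hgt (refl_j 0 s)"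
    using assms(3) unfolding ascent_def by blast
  show False
  proof (cases rule: not_ascent_cases[OF rank2_finite[OF G] neg])
    case 1
    then show False using u1 u2 rank2_pair[OF G u1(1) u2(1)]
      unfolding refl_simps profile_eq_iff by (smt (z3) profile_okD pair_okD)
  next
    case (2 d)
    then show False using u1 u2 rank2_pair[OF G u1(1) u2(1)]
        rank2_pair[OF G u1(1) 2(1)] rank2_pair[OF G u2(1) 2(1)] rank2_triple[OF G u1(1) u2(1) 2(1)]
      unfolding refl_simps profile_eq_iff by (smt (z3) profile_okD pair_okD triple_okD)
  qed
qed

lemma rank2_orth_ascent_j_after_i:
  assumes G: "rank2_data 0 T" and "ascent cj hgt T" "ascent ci hgt (refl_j 0 ` T)"
  shows "ascent cj hgt (refl_i 0 ` T)"
proof (rule ccontr)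
  assume "\<not> ?thesis"
  then have neg: "\<not> ascent (\<lambda>t. cj (refl_i 0 t)) (\<lambda>t. hgt (refl_i 0 t)) T"
    by (simp add: ascent_image)
  obtain u1 where u1: "u1 \<in> T" "cj u1 = -1" "\<forall>s\<in>T. cj s = 1 \<longrightarrow> hgt u1 < hgt s"
    using assms(2) unfolding ascent_def by blast
  obtain u2 where u2: "u2 \<in> T" "ci (refl_j 0 u2) = -1"
    "\<forall>s\<in>T. ci (refl_j 0 s) = 1 \<longrightarrow> hgt (refl_j 0 u2) < hgt (refl_j 0 s)"
    using assms(3) unfolding ascent_def by blast
  show False
  proof (cases rule: not_ascent_cases[OF rank2_finite[OF G] neg])
    case 1
    then show False using u1 u2 rank2_pair[OF G u1(1) u2(1)]
      unfolding refl_simps profile_eq_iff by (smt (z3) profile_okD pair_okD)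
  next
    case (2 d)
    then show False using u1 u2 rank2_pair[OF G u1(1) u2(1)]
        rank2_pair[OF G u1(1) 2(1)] rank2_pair[OF G u2(1) 2(1)] rank2_triple[OF G u1(1) u2(1) 2(1)]
      unfolding refl_simps profile_eq_iff by (smt (z3) profile_okD pair_okD triple_okD)
  qed
qed

lemma rank2_orth_lost_ascent:
  assumes G: "rank2_data 0 T" and "ascent cj hgt T" "\<not> ascent cj hgt (refl_i 0 ` T)"
  shows "\<exists>t\<in>T. \<exists>s\<in>T. ci t = -1 \<and> cj t = -1 \<and> ci s = 1 \<and> cj s = 1"
proof -
  have neg: "\<not> ascent (\<lambda>t. cj (refl_i 0 t)) (\<lambda>t. hgt (refl_i 0 t)) T"
    using assms(3) by (simp add: ascent_image)
  obtain u where u: "u \<in> T" "cj u = -1" "\<forall>s\<in>T. cj s = 1 \<longrightarrow> hgt u < hgt s"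
    using assms(2) unfolding ascent_def by blast
  show ?thesis
  proof (cases rule: not_ascent_cases[OF rank2_finite[OF G] neg])
    case 1
    then show ?thesis using u rank2_pair[OF G u(1) u(1)]
      unfolding refl_simps by (smt (z3) profile_okD)
  next
    case (2 d)
    then have "ci u = -1 \<and> cj u = -1 \<and> ci d = 1 \<and> cj d = 1"
      using u rank2_pair[OF G u(1) 2(1)]
      unfolding refl_simps profile_eq_iff by (smt (z3) profile_okD pair_okD)
    then show ?thesis using u(1) 2(1) by blast
  qed
qed

section \<open>The order on an orbit\<close>

locale orbit = simply_laced +
  fixes B0 :: "(nat \<Rightarrow> int) set"
  assumes orth_B0: "orth_set n adj B0"
begin

abbreviation Orbit :: "(nat \<Rightarrow> int) set set" ("\<B>") where "\<B> \<equiv> W_orbit n adj B0"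
abbreviation r :: "nat \<Rightarrow> (nat \<Rightarrow> int) set \<Rightarrow> (nat \<Rightarrow> int) set" where "r \<equiv> setact n adj"
abbreviation lt :: "(nat \<Rightarrow> int) set \<Rightarrow> (nat \<Rightarrow> int) set \<Rightarrow> bool" where "lt \<equiv> mless n adj \<B>"

lemma orbit_orth_set: "X \<in> \<B> \<Longrightarrow> orth_set n adj X"
  and orbit_card: "X \<in> \<B> \<Longrightarrow> card X = card B0"
  using W_orbit_orth_set[OF orth_B0] by blast+

lemma orbit_finite: "X \<in> \<B> \<Longrightarrow> finite X"
  using orbit_orth_set orth_set_finite by blast

lemma orbit_pos_roots: "X \<in> \<B> \<Longrightarrow> X \<subseteq> \<Phi>\<^sub>+"
  using orbit_orth_set by (simp add: orth_set_def)

lemma orbit_orth: "X \<in> \<B> \<Longrightarrow> a \<in> X \<Longrightarrow> b \<in> X \<Longrightarrow> a \<noteq> b \<Longrightarrow> a \<cdot> b = 0"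
  using orbit_orth_set by (simp add: orth_set_def)

lemma orbit_roots: "X \<in> \<B> \<Longrightarrow> b \<in> X \<Longrightarrow> b \<in> \<Phi>"
  using orbit_pos_roots pos_root_root by blast

lemma orbit_setact: "X \<in> \<B> \<Longrightarrow> k \<in> N \<Longrightarrow> r k X \<in> \<B>"
  by (rule W_orbit_setact)

lemma setact_orbit: "X \<in> \<B> \<Longrightarrow> k \<in> N \<Longrightarrow> r k X = root_act k ` X"
  using setact_pos_roots orbit_pos_roots by blast

lemma setact_setact:
  assumes "X \<in> \<B>" "k \<in> N"
  shows "r k (r k X) = X"
proof -
  have "r k (r k X) = (\<lambda>b. root_act k (root_act k b)) ` X"
    using assms orbit_setact by (simp add: setact_orbit image_image)
  also have "\<dots> = X"
    using root_act_involutive[OF _ assms(2)] orbit_pos_roots[OF assms(1)] by (simp add: subset_iff)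
  finally show ?thesis .
qed

lemma setact_comm:
  assumes "X \<in> \<B>" "i \<in> N" "j \<in> N" "\<not> adj i j" "i \<noteq> j"
  shows "r i (r j X) = r j (r i X)"
proof -
  have "r i (r j X) = (\<lambda>b. root_act i (root_act j b)) ` X"
    using assms(1-3) orbit_setact by (simp add: setact_orbit image_image)
  also have "\<dots> = (\<lambda>b. root_act j (root_act i b)) ` X"
    using root_act_comm[OF orbit_roots[OF assms(1)] assms(2-5)] by (rule image_cong[OF refl])
  also have "\<dots> = r j (r i X)"
    using assms(1-3) orbit_setact by (simp add: setact_orbit image_image)
  finally show ?thesis .
qed

lemma setact_braid:
  assumes "X \<in> \<B>" "i \<in> N" "j \<in> N" "adj i j"
  shows "r i (r j (r i X)) = r j (r i (r j X))"
proof -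
  have "r i (r j (r i X)) = (\<lambda>b. root_act i (root_act j (root_act i b))) ` X"
    using setact_orbit[OF orbit_setact[OF orbit_setact[OF assms(1,2)] assms(3)] assms(2)]
      setact_orbit[OF orbit_setact[OF assms(1,2)] assms(3)] setact_orbit[OF assms(1,2)]
    by (simp add: image_image)
  also have "\<dots> = (\<lambda>b. root_act j (root_act i (root_act j b))) ` X"
    using root_act_braid[OF orbit_roots[OF assms(1)] assms(2-4)] by (rule image_cong[OF refl])
  also have "\<dots> = r j (r i (r j X))"
    using setact_orbit[OF orbit_setact[OF orbit_setact[OF assms(1,3)] assms(2)] assms(3)]
      setact_orbit[OF orbit_setact[OF assms(1,3)] assms(2)] setact_orbit[OF assms(1,3)]
    by (simp add: image_image)
  finally show ?thesis .
qed

lemma lt_step: "X \<in> \<B> \<Longrightarrow> k \<in> N \<Longrightarrow> prec n X (r k X) \<Longrightarrow> lt X (r k X)"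
  unfolding mless_def by blast

lemma prec_step_potential:
  assumes "X \<in> \<B>" "k \<in> N" "prec n X (r k X)"
  shows "potential n (card B0) (r k X) < potential n (card B0) X"
proof (rule prec_potential_less)
  show "finite X" "finite (r k X)" using assms orbit_finite orbit_setact by blast+
  show "card X = card (r k X)" "card (r k X) \<le> card B0"
    using assms orbit_card orbit_setact by simp_all
  show "\<forall>b\<in>X. 0 \<le> ht n b" using orbit_pos_roots[OF assms(1)] pos_root_ht_ge1 by fastforce
qed (rule assms(3))

lemma lt_potential:
  assumes "lt X Y"
  shows "X \<in> \<B> \<and> Y \<in> \<B> \<and> potential n (card B0) Y < potential n (card B0) X"
  using assms unfolding mless_def
proof (induction rule: trancl_induct)
  case (base Y)
  then show ?case using prec_step_potential orbit_setact by blast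
next
  case (step Y Z)
  then obtain k where "Y \<in> \<B>" "k \<in> N" "Z = r k Y" "prec n Y Z" by blast
  then show ?case using step.IH prec_step_potential orbit_setact by fastforce
qed

lemma lt_irrefl: "\<not> lt X X"
  using lt_potential by blast

lemma lt_trans: "lt X Y \<Longrightarrow> lt Y Z \<Longrightarrow> lt X Z"
  unfolding mless_def by (rule trancl_trans)

abbreviation asc :: "nat \<Rightarrow> (nat \<Rightarrow> int) set \<Rightarrow> bool" where
  "asc k X \<equiv> ascent (\<lambda>b. b \<cdot> alpha k) (ht n) X"

definition moved :: "nat \<Rightarrow> (nat \<Rightarrow> int) set \<Rightarrow> (nat \<Rightarrow> int) set" where
  "moved k X = {b \<in> X. b \<cdot> alpha k \<in> {-1, 1}}"

lemma finite_moved: "X \<in> \<B> \<Longrightarrow> finite (moved k X)"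
  using orbit_finite by (simp add: moved_def)

lemma root_act_unmoved:
  assumes "X \<in> \<B>" "b \<in> X" "k \<in> N" "b \<cdot> alpha k \<notin> {-1, 1}"
  shows "root_act k b = b"
proof -
  have b: "b \<in> \<Phi>\<^sub>+" using assms(1,2) orbit_pos_roots by blast
  then have "b \<cdot> alpha k = 0 \<or> b = alpha k" using ip_pos_root_alpha_range[OF b assms(3)]
    assms(4) by auto
  then show ?thesis using root_act_pos_root_eq[OF b assms(3)] by (auto simp: rfl_def)
qed

lemma root_act_moved:
  assumes "X \<in> \<B>" "b \<in> X" "k \<in> N" "b \<cdot> alpha k \<in> {-1, 1}"
  shows "root_act k b = \<sigma> k b" and "ht n (root_act k b) = ht n b - b \<cdot> alpha k"
proof -
  have "b \<in> \<Phi>\<^sub>+" using assms(1,2) orbit_pos_roots by blast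
  moreover have "b \<noteq> alpha k" using assms(3,4) ip_alpha_self by fastforce
  ultimately show "root_act k b = \<sigma> k b" using root_act_pos_root_eq assms(3) by simp
  then show "ht n (root_act k b) = ht n b - b \<cdot> alpha k" using ht_reflect[OF assms(3)] by simp
qed

lemma movedD:
  assumes "X \<in> \<B>" "k \<in> N" "b \<in> moved k X"
  shows "ht n (root_act k b) = ht n b - b \<cdot> alpha k" "b \<in> X" "b \<cdot> alpha k \<in> {-1, 1}"
  using root_act_moved(2)[OF assms(1) _ assms(2)] assms(3) unfolding moved_def by auto

text \<open>A moved root \<open>\<beta>\<close> has inner product 1 with \<open>\<sigma>\<^sub>k \<beta>\<close>, so the two cannot both lie in the
  orthogonal set \<open>X\<close>.\<close>

lemma moved_not_in_setact:
  assumes "X \<in> \<B>" "b \<in> X" "k \<in> N" "b \<cdot> alpha k \<in> {-1, 1}"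
  shows "b \<notin> r k X"
proof
  assume "b \<in> r k X"
  then obtain g where g: "g \<in> X" "b = root_act k g" using setact_orbit[OF assms(1,3)] by blast
  then have "root_act k b = g" using root_act_involutive orbit_pos_roots[OF assms(1)] assms(3)
    by blast
  then have "g = \<sigma> k b" using root_act_moved(1)[OF assms] by simp
  then have "b \<cdot> g = 2 - (b \<cdot> alpha k) * (b \<cdot> alpha k)"
    using root_norm2[OF orbit_roots[OF assms(1,2)]] by (simp add: rfl_def ip_linear)
  also have "\<dots> = 1" using assms(4) by auto
  finally have "b \<cdot> g = 1" .
  moreover have "g \<noteq> b" using \<open>b \<cdot> g = 1\<close> root_norm2[OF orbit_roots[OF assms(1,2)]] by auto
  ultimately show False using orbit_orth[OF assms(1,2) g(1)] by simp
qed

lemma setact_diff: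
  assumes "X \<in> \<B>" "k \<in> N"
  shows "X - r k X = moved k X" and "r k X - X = root_act k ` moved k X"
proof -
  have img: "r k X = root_act k ` X" using setact_orbit[OF assms] .
  have inv: "root_act k (root_act k b) = b" if "b \<in> X" for b
    using root_act_involutive orbit_pos_roots[OF assms(1)] assms(2) that by blast
  show "X - r k X = moved k X"
    using moved_not_in_setact[OF assms(1) _ assms(2)] root_act_unmoved[OF assms(1) _ assms(2)]
    unfolding img moved_def by (auto, metis image_eqI)
  show "r k X - X = root_act k ` moved k X"
  proof (intro set_eqI iffI)
    fix g assume "g \<in> r k X - X"
    then obtain b where "b \<in> X" "g = root_act k b" "g \<notin> X" using img by blast
    then show "g \<in> root_act k ` moved k X"
      using root_act_unmoved[OF assms(1) _ assms(2)] unfolding moved_def by force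
  next
    fix g assume "g \<in> root_act k ` moved k X"
    then obtain b where b: "b \<in> X" "b \<cdot> alpha k \<in> {-1, 1}" "g = root_act k b"
      unfolding moved_def by blast
    have "g \<notin> X"
    proof
      assume "g \<in> X"
      then have "root_act k g \<in> r k X" using img by blast
      with inv[OF b(1)] b(3) show False using moved_not_in_setact[OF assms(1) b(1) assms(2)
        b(2)] by simp
    qed
    then show "g \<in> r k X - X" using img b by blast
  qed
qed

lemma setact_eq_self_iff:
  assumes "X \<in> \<B>" "k \<in> N"
  shows "r k X = X \<longleftrightarrow> moved k X = {}"
proof
  assume "moved k X = {}"
  then have "X \<subseteq> r k X" using setact_diff(1)[OF assms] by blast
  moreover have "finite (r k X)" "card X = card (r k X)"
    using assms orbit_finite orbit_card orbit_setact by simp_all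
  ultimately show "r k X = X" using card_subset_eq by metis
qed (use setact_diff(1)[OF assms] in auto)

text \<open>Two roots of \<open>X\<close> with coefficients \<open>-1\<close> and \<open>1\<close> at \<open>\<alpha>\<^sub>k\<close> never have heights \<open>h\<close> and \<open>h + 1\<close>:
  their difference minus \<open>\<alpha>\<^sub>k\<close> would be a root of height 0.\<close>

lemma no_unit_height_gap:
  assumes "X \<in> \<B>" "b \<in> X" "g \<in> X" "k \<in> N" "b \<cdot> alpha k = -1" "g \<cdot> alpha k = 1"
  shows "ht n g \<noteq> ht n b + 1"
proof -
  have "b \<noteq> g" using assms(5,6) by auto
  then show ?thesis
    using shift_norm2_ht[OF orbit_roots[OF assms(1,2)] orbit_roots[OF assms(1,3)]
        orbit_orth[OF assms(1,2,3)] assms(4,4), of "-1" 0] assms(5,6)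
    by auto
qed

lemma prec_setact_iff_ascent:
  assumes "X \<in> \<B>" "k \<in> N"
  shows "prec n X (r k X) \<longleftrightarrow> asc k X"
proof -
  let ?D = "moved k X"
  have D: "finite ?D" using finite_moved[OF assms(1)] .
  note hD = movedD[OF assms(1,2)]
  have prec: "prec n X (r k X) \<longleftrightarrow> ?D \<noteq> {} \<and> Min (ht n ` ?D) < Min (ht n ` root_act k ` ?D)"
    unfolding prec_def setact_diff[OF assms] using setact_eq_self_iff[OF assms] by auto
  show ?thesis
  proof
    assume "prec n X (r k X)"
    then have ne: "?D \<noteq> {}" and less: "Min (ht n ` ?D) < Min (ht n ` root_act k ` ?D)"
      using prec by auto
    have min': "Min (ht n ` root_act k ` ?D) \<le> ht n (root_act k b)" if "b \<in> ?D" for b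
      using D that by (intro Min_le) auto
    obtain u where u: "u \<in> ?D" "Min (ht n ` ?D) = ht n u" using obtains_MIN[OF D ne] by metis
    have "u \<cdot> alpha k = -1" using hD[OF u(1)] min'[OF u(1)] less u(2) by auto
    moreover have "ht n u < ht n g" if "g \<in> X" "g \<cdot> alpha k = 1" for g
    proof -
      have "g \<in> ?D" using that unfolding moved_def by simp
      then show ?thesis using hD min' less u(2) that(2) by fastforce
    qed
    ultimately show "asc k X" using hD(2)[OF u(1)] unfolding ascent_def by blast
  next
    assume "asc k X"
    then obtain b where b: "b \<in> X" "b \<cdot> alpha k = -1" "\<forall>g\<in>X. g \<cdot> alpha k = 1 \<longrightarrow> ht n b < ht n g"
      unfolding ascent_def by blast
    then have bD: "b \<in> ?D" unfolding moved_def by simp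
    then have ne: "?D \<noteq> {}" and "Min (ht n ` ?D) \<le> ht n b" using D by (auto intro: Min_le)
    moreover obtain d where d: "d \<in> ?D" "Min (ht n ` root_act k ` ?D) = ht n (root_act k d)"
      using obtains_MIN[OF D ne, of "\<lambda>b. ht n (root_act k b)"] unfolding image_image by blast
    moreover have "Min (ht n ` ?D) \<le> ht n d" using D d(1) by (intro Min_le) auto
    moreover have "ht n d \<noteq> ht n b + 1" if "d \<cdot> alpha k = 1"
      using no_unit_height_gap[OF assms(1) b(1) hD(2)[OF d(1)] assms(2) b(2) that] .
    ultimately have "Min (ht n ` ?D) < Min (ht n ` root_act k ` ?D)"
      using hD[OF d(1)] b(3) by force
    with ne show "prec n X (r k X)" using prec by blast
  qed
qed

lemma setact_prec_cases:
  assumes "X \<in> \<B>" "k \<in> N" "moved k X \<noteq> {}"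
  shows "prec n X (r k X) \<or> prec n (r k X) X"
proof -
  let ?D = "moved k X"
  have D: "finite ?D" using finite_moved[OF assms(1)] .
  note hD = movedD[OF assms(1,2)]
  obtain u where u: "u \<in> ?D" "Min (ht n ` ?D) = ht n u" using obtains_MIN[OF D assms(3)] by metis
  obtain d where d: "d \<in> ?D" "Min (ht n ` root_act k ` ?D) = ht n (root_act k d)"
    using obtains_MIN[OF D assms(3), of "\<lambda>b. ht n (root_act k b)"] unfolding image_image by blast
  have "Min (ht n ` ?D) \<le> ht n d" "Min (ht n ` root_act k ` ?D) \<le> ht n (root_act k u)"
    using D d(1) u(1) by (auto intro: Min_le)
  \<comment> \<open>equal minima would force \<open>u\<close> to go up and \<open>d\<close> to go down with \<open>ht d = ht u + 1\<close>\<close>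
  moreover have "ht n d \<noteq> ht n u + 1" if "u \<cdot> alpha k = -1" "d \<cdot> alpha k = 1"
    using no_unit_height_gap[OF assms(1) hD(2)[OF u(1)] hD(2)[OF d(1)] assms(2) that] .
  ultimately have "Min (ht n ` ?D) \<noteq> Min (ht n ` root_act k ` ?D)"
    using hD[OF u(1)] hD[OF d(1)] u(2) d(2) by auto
  then show ?thesis
    using setact_eq_self_iff[OF assms(1,2)] assms(3)
    unfolding prec_def setact_diff[OF assms(1,2)] by auto
qed

lemma lt_setact_iff_ascent:
  assumes "X \<in> \<B>" "k \<in> N"
  shows "lt X (r k X) \<longleftrightarrow> asc k X"
proof
  assume lt: "lt X (r k X)"
  show "asc k X"
  proof (rule ccontr)
    assume "\<not> asc k X"
    then have "\<not> prec n X (r k X)" using prec_setact_iff_ascent[OF assms] by simp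
    moreover have "moved k X \<noteq> {}" using lt lt_irrefl setact_eq_self_iff[OF assms] by force
    ultimately have "prec n (r k X) (r k (r k X))"
      using setact_prec_cases[OF assms] setact_setact[OF assms] by simp
    then have "lt (r k X) X" using lt_step[OF orbit_setact[OF assms] assms(2)] setact_setact[OF
      assms] by simp
    then show False using lt lt_trans lt_irrefl by blast
  qed
qed (use lt_step[OF assms] prec_setact_iff_ascent[OF assms] in blast)

lemma lt_setact_cases:
  assumes "X \<in> \<B>" "k \<in> N" "moved k X \<noteq> {}"
  shows "lt X (r k X) \<or> lt (r k X) X"
  using setact_prec_cases[OF assms] lt_step[OF assms(1,2)]
    lt_step[OF orbit_setact[OF assms(1,2)] assms(2)] setact_setact[OF assms(1,2)]
  by auto

definition profile_of :: "nat \<Rightarrow> nat \<Rightarrow> (nat \<Rightarrow> int) \<Rightarrow> profile" where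
  "profile_of i j b = (b \<cdot> alpha i, b \<cdot> alpha j, ht n b)"

lemma ascent_profile_of:
  "ascent ci hgt (profile_of i j ` X) \<longleftrightarrow> asc i X"
  "ascent cj hgt (profile_of i j ` X) \<longleftrightarrow> asc j X"
  by (simp_all add: ascent_image profile_of_def)

lemma profile_of_root_act:
  assumes "b \<in> \<Phi>\<^sub>+" "i \<in> N" "j \<in> N"
  shows "profile_of i j (root_act i b) = refl_i (cartan adj i j) (profile_of i j b)"
    and "profile_of i j (root_act j b) = refl_j (cartan adj i j) (profile_of i j b)"
  using root_act_coord[OF assms(1)] root_act_ht[OF assms(1)] assms(2,3) cartan_sym[of i j]
  by (auto simp: profile_of_def refl_i_def refl_j_def cartan_def)

lemma profile_of_setact:
  assumes "X \<in> \<B>" "i \<in> N" "j \<in> N"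
  shows "profile_of i j ` r i X = refl_i (cartan adj i j) ` profile_of i j ` X"
    and "profile_of i j ` r j X = refl_j (cartan adj i j) ` profile_of i j ` X"
proof -
  have "profile_of i j (root_act i b) = refl_i (cartan adj i j) (profile_of i j b)"
    "profile_of i j (root_act j b) = refl_j (cartan adj i j) (profile_of i j b)" if "b \<in> X" for b
    using profile_of_root_act[OF _ assms(2,3)] orbit_pos_roots[OF assms(1)] that by blast+
  then show "profile_of i j ` r i X = refl_i (cartan adj i j) ` profile_of i j ` X"
    "profile_of i j ` r j X = refl_j (cartan adj i j) ` profile_of i j ` X"
    unfolding setact_orbit[OF assms(1,2)] setact_orbit[OF assms(1,3)] image_image
    by (auto intro!: image_cong)
qed

lemma profile_ok_profile_of:
  assumes "X \<in> \<B>" "b \<in> X" "i \<in> N" "j \<in> N" "i \<noteq> j"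
  shows "profile_ok (cartan adj i j) (profile_of i j b)"
proof -
  have b: "b \<in> \<Phi>\<^sub>+" using assms(1,2) orbit_pos_roots by blast
  have "b \<cdot> alpha i = 2 \<longrightarrow> b \<cdot> alpha j = cartan adj i j \<and> ht n b = 1"
    using ip_pos_root_alpha_range(2)[OF b assms(3)] ip_alpha_alpha[OF assms(3,4)] ht_alpha[OF
      assms(3)]
    by auto
  moreover have "b \<cdot> alpha j = 2 \<longrightarrow> b \<cdot> alpha i = cartan adj i j \<and> ht n b = 1"
    using ip_pos_root_alpha_range(2)[OF b assms(4)] ip_alpha_alpha[OF assms(4,3)] ht_alpha[OF
      assms(4)]
      cartan_sym by auto
  moreover have "\<not> (b \<cdot> alpha i = -1 \<and> b \<cdot> alpha j = -1)" if "adj i j"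
  proof
    assume "b \<cdot> alpha i = -1 \<and> b \<cdot> alpha j = -1"
    then have "b = (\<lambda>k. - 1 * alpha i k - 1 * alpha j k)"
      using root_shift_eq_0[OF pos_root_root[OF b] assms(3,4), of 1 1] cartan_adj[OF that] by simp
    then have "b i = -1" using assms(5) by (simp add: alpha_def)
    moreover have "0 \<le> b i" using b by (simp add: pos_roots_iff)
    ultimately show False by simp
  qed
  moreover have "ht n b = 2" if "adj i j" "b \<cdot> alpha i = 1" "b \<cdot> alpha j = 1"
  proof -
    have "b = (\<lambda>k. - (-1) * alpha i k - (-1) * alpha j k)"
      using root_shift_eq_0[OF pos_root_root[OF b] assms(3,4), of "-1" "-1"] cartan_adj[OF
        that(1)] that(2,3)
      by simp
    then show ?thesis using assms(3,4) by (simp add: ht_linear ht_alpha)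
  qed
  ultimately show ?thesis
    using ip_pos_root_alpha_range(1)[OF b assms(3)] ip_pos_root_alpha_range(1)[OF b assms(4)]
      pos_root_ht_ge1[OF b] assms(5)
    by (auto simp: profile_ok_def profile_of_def cartan_def)
qed

lemma pair_ok_profile_of:
  assumes "X \<in> \<B>" "b \<in> X" "g \<in> X" "b \<noteq> g" "i \<in> N" "j \<in> N" "i \<noteq> j"
  shows "pair_ok (cartan adj i j) (profile_of i j b) (profile_of i j g)"
proof -
  have b: "b \<in> \<Phi>\<^sub>+" and g: "g \<in> \<Phi>\<^sub>+" using assms(1-3) orbit_pos_roots by blast+
  have bg: "b \<cdot> g = 0" "g \<cdot> b = 0" using orbit_orth assms(1-4) by metis+
  let ?N = "\<lambda>x y. 4 + 2*x*x + 2*y*y + 2*x*y * cartan adj i j + 2*x * (g \<cdot> alpha i - b \<cdot> alpha i)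
       + 2*y * (g \<cdot> alpha j - b \<cdot> alpha j)"
  have "?N x y \<ge> 0" for x y
  proof -
    from ip_self_nonneg[OF supported_shift[OF pos_root_root[OF b] pos_root_root[OF g] assms(5,6)]]
    show ?thesis
      unfolding ip_self_shift[OF pos_root_root[OF b] pos_root_root[OF g] bg(1) assms(5,6)] .
  qed
  moreover have "g \<cdot> alpha i = b \<cdot> alpha i - 2*x - y * cartan adj i j \<and>
      g \<cdot> alpha j = b \<cdot> alpha j - x * cartan adj i j - 2*y \<and>
      ht n g = ht n b - (x + y) \<and> x * (b \<cdot> alpha i) + y * (b \<cdot> alpha j) = 2" if "?N x y = 0" for x y
  proof -
    have e: "g = (\<lambda>k. b k - x * alpha i k - y * alpha j k)"
      using shift_norm0_eq[OF pos_root_root[OF b] pos_root_root[OF g] bg(1) assms(5,6) that] .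
    have "b \<cdot> g = 2 - x * (b \<cdot> alpha i) - y * (b \<cdot> alpha j)"
      using root_norm2[OF pos_root_root[OF b]] by (subst e) (simp add: ip_linear)
    then show ?thesis
      using bg(1) ip_alpha_alpha[OF assms(5,6)] ip_alpha_alpha[OF assms(6,5)] ip_alpha_self
        assms(5,6)
        cartan_sym[of i j]
      by (subst (1 2 3) e) (simp add: ip_linear ht_linear ht_alpha algebra_simps)
  qed
  moreover have "ht n g - ht n b + x + y \<noteq> 0" if "?N x y = 2" for x y
    using shift_norm2_ht[OF pos_root_root[OF b] pos_root_root[OF g] bg(1) assms(5,6) that] .
  moreover have "b \<cdot> alpha i = 2 \<longrightarrow> g \<cdot> alpha i = 0" "b \<cdot> alpha j = 2 \<longrightarrow> g \<cdot> alpha j = 0"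
    using ip_pos_root_alpha_range(2)[OF b] assms(5,6) bg(2) by auto
  moreover have "g \<cdot> alpha i + g \<cdot> alpha j = 0"
    if "cartan adj i j = -1" "b \<cdot> alpha i = 1" "b \<cdot> alpha j = 1"
  proof -
    have "b = (\<lambda>k. - (-1) * alpha i k - (-1) * alpha j k)"
      using root_shift_eq_0[OF pos_root_root[OF b] assms(5,6), of "-1" "-1"] that by simp
    then have "g \<cdot> b = g \<cdot> alpha i + g \<cdot> alpha j" by (simp add: ip_linear)
    then show ?thesis using bg(2) by simp
  qed
  ultimately show ?thesis
    unfolding pair_ok_def pnorm_def profile_of_def profile_sel by blast
qed

lemma triple_ok_profile_of:
  assumes "X \<in> \<B>" "b \<in> X" "g \<in> X" "u \<in> X" "b \<noteq> g" "b \<noteq> u" "g \<noteq> u" "i \<in> N" "j \<in> N"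
  shows "triple_ok (cartan adj i j) (profile_of i j b) (profile_of i j g) (profile_of i j u)"
  unfolding triple_ok_def pnorm_def profile_of_def profile_sel
proof (intro ballI impI)
  fix x y
  assume "4 + 2*x*x + 2*y*y + 2*x*y * cartan adj i j + 2*x * (g \<cdot> alpha i - b \<cdot> alpha i)
       + 2*y * (g \<cdot> alpha j - b \<cdot> alpha j) = 0"
  then have e: "g = (\<lambda>k. b k - x * alpha i k - y * alpha j k)"
    using shift_norm0_eq[OF orbit_roots[OF assms(1,2)] orbit_roots[OF assms(1,3)]
        orbit_orth[OF assms(1,2,3,5)] assms(8,9)] by blast
  have "u \<cdot> g = u \<cdot> b - x * (u \<cdot> alpha i) - y * (u \<cdot> alpha j)" by (subst e) (simp add: ip_linear)
  then show "x * (u \<cdot> alpha i) + y * (u \<cdot> alpha j) = 0"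
    using orbit_orth[OF assms(1,4,3)] orbit_orth[OF assms(1,4,2)] assms(6,7) by fastforce
qed

lemma rank2_data_profile_of:
  assumes "X \<in> \<B>" "i \<in> N" "j \<in> N" "i \<noteq> j"
  shows "rank2_data (cartan adj i j) (profile_of i j ` X)"
  unfolding rank2_data_def
proof (intro conjI ballI impI)
  show "finite (profile_of i j ` X)" using orbit_finite[OF assms(1)] by simp
  fix t s u assume "t \<in> profile_of i j ` X" "s \<in> profile_of i j ` X" "u \<in> profile_of i j ` X"
  then obtain b g w where "b \<in> X" "g \<in> X" "w \<in> X"
    and tsu: "t = profile_of i j b" "s = profile_of i j g" "u = profile_of i j w" by blast
  then show "profile_ok (cartan adj i j) t" using profile_ok_profile_of assms by blast
  show "pair_ok (cartan adj i j) t s" if "t \<noteq> s"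
    using pair_ok_profile_of \<open>b \<in> X\<close> \<open>g \<in> X\<close> assms that tsu by blast
  show "triple_ok (cartan adj i j) t s u" if "t \<noteq> s \<and> t \<noteq> u \<and> s \<noteq> u"
    using triple_ok_profile_of \<open>b \<in> X\<close> \<open>g \<in> X\<close> \<open>w \<in> X\<close> assms that tsu by blast
qed

lemma lt_setact_rev_iff:
  assumes "X \<in> \<B>" "k \<in> N"
  shows "lt (r k X) X \<longleftrightarrow> asc k (r k X)"
  using lt_setact_iff_ascent[OF orbit_setact[OF assms] assms(2)] setact_setact[OF assms] by simp

lemma rank2_data_adj:
  assumes "X \<in> \<B>" "i \<in> N" "j \<in> N" "adj i j"
  shows "rank2_data (-1) (profile_of i j ` X)"
  using rank2_data_profile_of[OF assms(1-3)] adj_nodes[OF assms(4)] cartan_adj[OF assms(4)] by simp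

lemma rank2_data_orth:
  assumes "X \<in> \<B>" "i \<in> N" "j \<in> N" "\<not> adj i j" "i \<noteq> j"
  shows "rank2_data 0 (profile_of i j ` X)"
  using rank2_data_profile_of[OF assms(1-3,5)] cartan_not_adj[OF assms(4,5)] by simp

lemma asc_adj_j_after_i:
  assumes "X \<in> \<B>" "i \<in> N" "j \<in> N" "adj i j" "asc i X" "asc j X"
  shows "asc j (r i X)"
  using rank2_adj_ascent_j_after_i[OF rank2_data_adj[OF assms(1-4)]] assms(5,6)
  by (simp add: ascent_profile_of
      profile_of_setact[OF assms(1-3), unfolded cartan_adj[OF assms(4)], symmetric])

lemma asc_adj_i_after_ji:
  assumes "X \<in> \<B>" "i \<in> N" "j \<in> N" "adj i j" "asc i X" "asc j X"
  shows "asc i (r j (r i X))"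
  using rank2_adj_ascent_i_after_ji[OF rank2_data_adj[OF assms(1-4)]] assms(5,6)
    asc_adj_j_after_i[OF assms]
  by (simp add: ascent_profile_of
      profile_of_setact[OF assms(1-3), unfolded cartan_adj[OF assms(4)], symmetric]
      profile_of_setact[OF orbit_setact[OF assms(1,2)] assms(2,3), unfolded cartan_adj[OF
        assms(4)], symmetric])

lemma asc_adj_j:
  assumes "X \<in> \<B>" "i \<in> N" "j \<in> N" "adj i j" "asc i X" "asc j (r i X)" "asc i (r j (r i X))"
  shows "asc j X"
  using rank2_adj_ascent_j[OF rank2_data_adj[OF assms(1-4)]] assms(5-7)
  by (simp add: ascent_profile_of
      profile_of_setact[OF assms(1-3), unfolded cartan_adj[OF assms(4)], symmetric]
      profile_of_setact[OF orbit_setact[OF assms(1,2)] assms(2,3), unfolded cartan_adj[OF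
        assms(4)], symmetric])

lemma asc_orth:
  assumes "X \<in> \<B>" "i \<in> N" "j \<in> N" "\<not> adj i j" "i \<noteq> j" "asc j X" "asc i (r j X)"
  shows "asc i X" and "asc j (r i X)"
  using rank2_orth_ascent_i[OF rank2_data_orth[OF assms(1-5)]]
    rank2_orth_ascent_j_after_i[OF rank2_data_orth[OF assms(1-5)]]
    assms(6,7)
  by (simp_all add: ascent_profile_of
      profile_of_setact[OF assms(1-3), unfolded cartan_not_adj[OF assms(4,5)], symmetric])

text \<open>If the ascent at \<open>j\<close> were lost under \<open>r\<^sub>i\<close>, then \<open>r\<^sub>i X\<close> would contain \<open>\<gamma> = \<beta> + \<alpha>\<^sub>i\<close>
  and \<open>\<gamma> - \<alpha>\<^sub>i + \<alpha>\<^sub>j\<close> for some \<open>\<beta> \<in> X\<close>, and admissibility would force \<open>r\<^sub>i X = r\<^sub>j X\<close>.\<close>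

lemma asc_orth_after_i:
  assumes adm: "admissible n adj \<B>"
    and "X \<in> \<B>" "i \<in> N" "j \<in> N" "\<not> adj i j" "i \<noteq> j" "asc j X" "r i X \<noteq> r j X"
  shows "asc j (r i X)"
proof (rule ccontr)
  assume "\<not> asc j (r i X)"
  then have "\<not> ascent cj hgt (refl_i 0 ` profile_of i j ` X)" "ascent cj hgt (profile_of i j ` X)"
    using assms(7) by (simp_all add: ascent_profile_of
        profile_of_setact[OF assms(2-4), unfolded cartan_not_adj[OF assms(5,6)], symmetric])
  then obtain b g where "b \<in> X" "g \<in> X"
    "ci (profile_of i j b) = -1" "cj (profile_of i j b) = -1"
    "ci (profile_of i j g) = 1" "cj (profile_of i j g) = 1"
    using rank2_orth_lost_ascent[OF rank2_data_orth[OF assms(2-6)]] by blast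
  then have bg: "b \<in> X" "g \<in> X" "b \<cdot> alpha i = -1" "b \<cdot> alpha j = -1"
    "g \<cdot> alpha i = 1" "g \<cdot> alpha j = 1"
    by (simp_all add: profile_of_def)
  then have "b \<noteq> g" by auto
  then have g: "g = (\<lambda>k. b k + alpha i k + alpha j k)"
    using shift_norm0_eq[OF orbit_roots[OF assms(2) bg(1)] orbit_roots[OF assms(2) bg(2)]
        orbit_orth[OF assms(2) bg(1,2)] assms(3,4), of "-1" "-1"] bg(3-6) cartan_not_adj[OF
          assms(5,6)]
    by (simp add: fun_eq_iff)
  define \<gamma> where "\<gamma> = root_act i b"
  have "\<gamma> = (\<lambda>k. b k + alpha i k)"
    using root_act_moved(1)[OF assms(2) bg(1) assms(3)] bg(3) by (simp add: \<gamma>_def rfl_def)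
  moreover have "root_act i g = (\<lambda>k. g k - alpha i k)"
    using root_act_moved(1)[OF assms(2) bg(2) assms(3)] bg(5) by (simp add: rfl_def)
  ultimately have "root_act i g = (\<lambda>k. \<gamma> k - alpha i k + alpha j k)" by (simp add: g)
  then have "\<gamma> \<in> r i X" "(\<lambda>k. \<gamma> k - alpha i k + alpha j k) \<in> r i X"
    using imageI[OF bg(1), of "root_act i"] imageI[OF bg(2), of "root_act i"]
    unfolding setact_orbit[OF assms(2,3)] \<gamma>_def by simp_all
  moreover have "\<gamma> \<in> \<Phi>" using orbit_roots[OF orbit_setact[OF assms(2,3)]] calculation(1) .
  ultimately have "r i (r i X) = r j (r i X)"
    using adm orbit_setact[OF assms(2,3)] assms(3-5) unfolding admissible_def by blast
  then have "r j (r j (r i X)) = r j X" using setact_setact[OF assms(2,3)] by simp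
  then have "r j X = r i X" using setact_setact[OF orbit_setact[OF assms(2,3)] assms(4)] by simp
  with assms(8) show False by simp
qed

lemma lt_commuting_descent:
  assumes "B \<in> \<B>" "i \<in> N" "j \<in> N" "\<not> adj i j"
    and "lt (r i (r j B)) (r i B)" "lt (r i B) B"
  shows "lt (r i (r j B)) (r j B) \<and> lt (r j B) B"
proof (cases "i = j")
  case True
  then have "lt B (r i B)" using assms(5) setact_setact[OF assms(1,2)] by simp
  then show ?thesis using assms(6) lt_trans lt_irrefl by blast
next
  case False
  define Y where "Y = r i (r j B)"
  have Y: "Y \<in> \<B>" unfolding Y_def using assms(1-3) orbit_setact by blast
  have rjY: "r j Y = r i B"
    unfolding Y_def setact_comm[OF assms(1-4) False] using setact_setact orbit_setact assms(1-3)
      by blast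
  have riY: "r i Y = r j B" unfolding Y_def using setact_setact orbit_setact assms(1-3) by blast
  have "asc j Y" using assms(5) lt_setact_iff_ascent[OF Y assms(3)] rjY Y_def by simp
  moreover have "asc i (r j Y)"
    using assms(6) lt_setact_rev_iff[OF assms(1,2)] rjY by simp
  ultimately have "asc i Y" "asc j (r i Y)" using asc_orth[OF Y assms(2-4) False] by blast+
  then show ?thesis
    using lt_setact_iff_ascent[OF Y assms(2)] lt_setact_rev_iff[OF assms(1,3)] riY Y_def by simp
qed

lemma lt_commuting_ascent:
  assumes "admissible n adj \<B>" "B \<in> \<B>" "i \<in> N" "j \<in> N" "\<not> adj i j"
    and "lt B (r i B)" "lt B (r j B)" "r i B \<noteq> r j B"
  shows "lt (r i B) (r i (r j B)) \<and> lt (r j B) (r i (r j B))"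
proof -
  have ij: "i \<noteq> j" using assms(8) by auto
  have "asc i B" "asc j B" using assms(6,7) lt_setact_iff_ascent assms(2-4) by blast+
  moreover have "\<not> adj j i" using assms(5) adj_sym by blast
  ultimately have "asc j (r i B)" "asc i (r j B)"
    using asc_orth_after_i[OF assms(1-5) ij] asc_orth_after_i[OF assms(1,2,4,3) _ ij[symmetric]]
      assms(8) by auto
  then show ?thesis
    using lt_setact_iff_ascent[OF orbit_setact[OF assms(2,3)] assms(4)]
      lt_setact_iff_ascent[OF orbit_setact[OF assms(2,4)] assms(3)] setact_comm[OF assms(2-5) ij]
    by simp
qed

lemma lt_braid_ascent:
  assumes "B \<in> \<B>" "i \<in> N" "j \<in> N" "adj i j" "lt B (r i B)" "lt B (r j B)"
  shows "lt (r i B) (r j (r i B)) \<and> lt (r j (r i B)) (r i (r j (r i B)))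
    \<and> lt (r j B) (r i (r j B)) \<and> lt (r i (r j B)) (r j (r i (r j B)))"
proof -
  have ji: "adj j i" using adj_sym[OF assms(4)] .
  have "asc i B" "asc j B" using assms(5,6) lt_setact_iff_ascent assms(1-3) by blast+
  then have "asc j (r i B)" "asc i (r j (r i B))" "asc i (r j B)" "asc j (r i (r j B))"
    using asc_adj_j_after_i[OF assms(1-4)] asc_adj_i_after_ji[OF assms(1-4)]
      asc_adj_j_after_i[OF assms(1,3,2) ji] asc_adj_i_after_ji[OF assms(1,3,2) ji] by blast+
  then show ?thesis
    using lt_setact_iff_ascent[OF orbit_setact[OF assms(1,2)] assms(3)]
      lt_setact_iff_ascent[OF orbit_setact[OF assms(1,3)] assms(2)]
      lt_setact_iff_ascent[OF orbit_setact[OF orbit_setact[OF assms(1,2)] assms(3)] assms(2)]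
      lt_setact_iff_ascent[OF orbit_setact[OF orbit_setact[OF assms(1,3)] assms(2)] assms(3)]
    by simp
qed

lemma lt_braid_descent:
  assumes "B \<in> \<B>" "i \<in> N" "j \<in> N" "adj i j"
    and "lt (r j (r i (r j B))) (r j (r i B))" "lt (r j (r i B)) (r i B)" "lt (r i B) B"
  shows "lt (r j (r i (r j B))) (r i (r j B)) \<and> lt (r i (r j B)) (r j B) \<and> lt (r j B) B"
proof -
  have ji: "adj j i" using adj_sym[OF assms(4)] .
  define Z where "Z = r j (r i (r j B))"
  have B1: "r i B \<in> \<B>" "r j B \<in> \<B>" using assms(1-3) orbit_setact by blast+
  have B2: "r j (r i B) \<in> \<B>" "r i (r j B) \<in> \<B>" using B1 assms(2,3) orbit_setact by blast+
  have Z: "Z \<in> \<B>" unfolding Z_def using B2(2) assms(3) by (rule orbit_setact)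
  have riZ: "r i Z = r j (r i B)"
    unfolding Z_def setact_braid[OF assms(1,3,2) ji] by (rule setact_setact[OF B2(1) assms(2)])
  have rjriZ: "r j (r i Z) = r i B" unfolding riZ by (rule setact_setact[OF B1(1) assms(3)])
  have rjZ: "r j Z = r i (r j B)" unfolding Z_def by (rule setact_setact[OF B2(2) assms(3)])
  have rirjZ: "r i (r j Z) = r j B" unfolding rjZ by (rule setact_setact[OF B1(2) assms(2)])
  have "asc i Z" using assms(5) lt_setact_iff_ascent[OF Z assms(2)] riZ Z_def by simp
  moreover have "asc j (r i Z)"
    using assms(6) lt_setact_iff_ascent[OF orbit_setact[OF Z assms(2)] assms(3)] riZ rjriZ by simp
  moreover have "asc i (r j (r i Z))" using assms(7) lt_setact_rev_iff[OF assms(1,2)] rjriZ by simp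
  ultimately have "asc j Z" using asc_adj_j[OF Z assms(2-4)] by blast
  with \<open>asc i Z\<close> have "asc i (r j Z)" "asc j (r i (r j Z))"
    using asc_adj_j_after_i[OF Z assms(3,2) ji] asc_adj_i_after_ji[OF Z assms(3,2) ji] by blast+
  then show ?thesis
    using \<open>asc j Z\<close> lt_setact_iff_ascent[OF Z assms(3)]
      lt_setact_iff_ascent[OF orbit_setact[OF Z assms(3)] assms(2)] lt_setact_rev_iff[OF assms(1,3)]
      Z_def rjZ rirjZ by simp
qed

lemma lt_comparable_if_not_perp:
  assumes "B \<in> \<B>" "i \<in> N" "alpha i \<notin> perp n adj B \<union> B"
  shows "lt (r i B) B \<or> lt B (r i B)"
proof -
  obtain b where b: "b \<in> B" "alpha i \<cdot> b \<noteq> 0"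
    using assms(3) roots.simple[OF assms(2)] unfolding perp_def by blast
  moreover have "b \<noteq> alpha i" using assms(3) b(1) by blast
  ultimately have "b \<cdot> alpha i \<in> {-1, 1}"
    using ip_pos_root_alpha_range[OF _ assms(2), of b] orbit_pos_roots[OF assms(1)] ip_sym[of b]
    by auto
  then have "moved i B \<noteq> {}" using b(1) unfolding moved_def by blast
  then show ?thesis using lt_setact_cases[OF assms(1,2)] by blast
qed

end

theorem lemma3p4:
  fixes n :: nat and adj :: "nat \<Rightarrow> nat \<Rightarrow> bool"
    and \<B> :: "(nat \<Rightarrow> int) set set" and B :: "(nat \<Rightarrow> int) set" and i j :: nat
  assumes M: "spherical_simply_laced n adj"
    and orb: "is_orbit n adj \<B>"
    and adm: "admissible n adj \<B>"
    and B: "B \<in> \<B>"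
    and i: "i \<in> nodes n" and j: "j \<in> nodes n"
  defines "lt \<equiv> mless n adj \<B>" and "r \<equiv> setact n adj"
  shows
    "(\<not> adj i j \<and> lt (r i (r j B)) (r i B) \<and> lt (r i B) B
        \<longrightarrow> lt (r i (r j B)) (r j B) \<and> lt (r j B) B)
   \<and> (\<not> adj i j \<and> lt B (r i B) \<and> lt B (r j B) \<and> r i B \<noteq> r j B
        \<longrightarrow> lt (r i B) (r i (r j B)) \<and> lt (r j B) (r i (r j B)))
   \<and> (adj i j \<and> lt B (r i B) \<and> lt B (r j B)
        \<longrightarrow> lt (r i B) (r j (r i B)) \<and> lt (r j (r i B)) (r i (r j (r i B)))
          \<and> lt (r j B) (r i (r j B)) \<and> lt (r i (r j B)) (r j (r i (r j B))))
   \<and> (adj i j \<and> lt (r j (r i (r j B))) (r j (r i B)) \<and> lt (r j (r i B)) (r i B) \<and> lt (r i B) B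
        \<longrightarrow> lt (r j (r i (r j B))) (r i (r j B)) \<and> lt (r i (r j B)) (r j B) \<and> lt (r j B) B)
   \<and> (alpha i \<notin> perp n adj B \<union> B \<longrightarrow> lt (r i B) B \<or> lt B (r i B))"
proof -
  obtain B0 where B0: "orth_set n adj B0" and orbit_eq: "\<B> = W_orbit n adj B0"
    using orb unfolding is_orbit_def by blast
  interpret orbit n adj B0 using M B0 by unfold_locales
  note B' = B[unfolded orbit_eq]
  show ?thesis
    unfolding lt_def r_def orbit_eq
    using lt_commuting_descent[OF B' i j] lt_commuting_ascent[OF adm[unfolded orbit_eq] B' i j]
      lt_braid_ascent[OF B' i j] lt_braid_descent[OF B' i j] lt_comparable_if_not_perp[OF B' i]
    by blast
qed

end
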